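(* Run the distributed regularized primal-dual algorithm described in the context for $T$ iterations with stepsize $\alpha(t)=\frac{R}{\sqrt{t+1}}$ and regularization parameter $\eta>0$ satisfying $\eta\alpha(t)\le\frac12$. Then for every agent $i=1,\dots,n$ and every $T\ge 2$, \[ f(\widehat{x}_{i}(T))-f(x_{\ast})\leq \frac{RC\log(T)}{\sqrt{T}-1}, \] where \[ C=1+\frac52 mL^2R^2+20L^2\left(1+\frac{nm^{3/2}LR}{\eta}\right)^2\left(\frac{\log(T\sqrt{nT})}{1-\sigma_2(W)}\right)^{3/2}. \]
   Context: Norms are Euclidean. Problem: minimize $f(x)=\frac1n\sum_{i=1}^n f_i(x)$ over $\mathcal{X}=\{x\in\mathbb{R}^d: g_k(x)\le 0,\ k=1,\dots,m\}$; write $g=(g_1,\dots,g_m)^T$. Assumptions: $\mathcal{X}$ is non-empty, convex and compact; $R$ is the smallest radius with $\mathcal{X}\subseteq \mathbb{B}_d(R)=\{x:\|x\|\le R\}$; there is a Slater vector $\tilde x$ with $g_k(\tilde x)<0$ for all $k$; all $f_i$ and $g_k$ are convex on $\mathbb{B}_d(R)$ and all their subgradients there satisfy $\|\nabla f_i(x)\|\le L$, $\|\nabla g_k(x)\|\le L$. $x_\ast$ denotes an optimal solution. Agents $1,\dots,n$ are nodes of a connected graph $G=(V,E)$; $W\in\mathbb{R}^{n\times n}$ is doubly stochastic with $W_{ij}>0$ if $(i,j)\in E$ and $W_{ij}=0$ if $(i,j)\notin E$; $\sigma_2(W)$ is the second largest singular value of $W$. Regularized Lagrangian of agent $i$: $L_i(x,\lambda)=f_i(x)+\langle\lambda,g(x)\rangle-\frac{\eta}{2}\|\lambda\|^2$,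 with subgradients $\nabla_xL_i(x,\lambda)=\nabla f_i(x)+\sum_{k=1}^m\lambda_k\nabla g_k(x)$ and $\nabla_\lambda L_i(x,\lambda)=g(x)-\eta\lambda$. Algorithm: $x_i(0)=0$, $\lambda_i(0)=0$; for $t=0,1,2,\dots$: $y_i(t)=x_i(t)-\alpha(t)\nabla_xL_i(x_i(t),\lambda_i(t))$, $\gamma_i(t)=\lambda_i(t)+\alpha(t)\nabla_\lambda L_i(x_i(t),\lambda_i(t))$, $x_i(t+1)=\Pi_{\mathbb{B}_d(R)}(\sum_j W_{ij}y_j(t))$, $\lambda_i(t+1)=\Pi_{\mathbb{R}^m_+}(\sum_jW_{ij}\gamma_j(t))$, where $\Pi$ denotes Euclidean projection. The estimate is $\widehat{x}_i(T)=\sum_{t=0}^{T-1}\alpha(t)x_i(t)/\sum_{t=0}^{T-1}\alpha(t)$. *)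

theory Defs
  imports "HOL-Analysis.Analysis" "HOL-Computational_Algebra.Polynomial" "HOL-Library.Multiset"
begin

definition charpoly :: "real^'n^'n \<Rightarrow> real poly" where
  "charpoly A = det (\<chi> i j. (if i = j then [:0, 1:] else 0) - [:A $ i $ j:])"

(* Singular values of A (with multiplicity), in decreasing order:
   square roots of the eigenvalues of A^T A (all real and >= 0). *)
definition singular_values :: "real^'n^'n \<Rightarrow> real list" where
  "singular_values A = map sqrt (rev (sorted_list_of_multiset (proots (charpoly (transpose A ** A)))))"

definition sigma2 :: "real^'n^'n \<Rightarrow> real" where
  "sigma2 A = (if length (singular_values A) \<ge> 2 then singular_values A ! 1 else 0)"

definition nonneg_orthant :: "(real^'m) set" where
  "nonneg_orthant = {v. \<forall>k. 0 \<le> v $ k}"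

(* Df i x : the subgradient of f_i at x used by the algorithm;
   Dg k x : the subgradient of g_k at x used by the algorithm. *)
primrec pd_iter ::
  "real^'n^'n \<Rightarrow> real \<Rightarrow> real \<Rightarrow> (nat \<Rightarrow> real) \<Rightarrow>
   ('n \<Rightarrow> 'a::euclidean_space \<Rightarrow> 'a) \<Rightarrow> ('m::finite \<Rightarrow> 'a \<Rightarrow> real) \<Rightarrow> ('m \<Rightarrow> 'a \<Rightarrow> 'a) \<Rightarrow>
   nat \<Rightarrow> ('n \<Rightarrow> 'a) \<times> ('n \<Rightarrow> real^'m)" where
  "pd_iter W R \<eta> \<alpha> Df g Dg 0 = (\<lambda>i. 0, \<lambda>i. 0)"
| "pd_iter W R \<eta> \<alpha> Df g Dg (Suc t) =
     (let x = fst (pd_iter W R \<eta> \<alpha> Df g Dg t);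
          lam = snd (pd_iter W R \<eta> \<alpha> Df g Dg t);
          y = (\<lambda>i. x i - \<alpha> t *\<^sub>R (Df i (x i) + (\<Sum>k\<in>UNIV. (lam i $ k) *\<^sub>R Dg k (x i))));
          \<gamma> = (\<lambda>i. lam i + \<alpha> t *\<^sub>R ((\<chi> k. g k (x i)) - \<eta> *\<^sub>R lam i))
      in (\<lambda>i. closest_point (cball 0 R) (\<Sum>j\<in>UNIV. (W $ i $ j) *\<^sub>R y j),
          \<lambda>i. closest_point nonneg_orthant (\<Sum>j\<in>UNIV. (W $ i $ j) *\<^sub>R \<gamma> j)))"

definition pd_estimate ::
  "real^'n^'n \<Rightarrow> real \<Rightarrow> real \<Rightarrow> (nat \<Rightarrow> real) \<Rightarrow>
   ('n \<Rightarrow> 'a::euclidean_space \<Rightarrow> 'a) \<Rightarrow> ('m::finite \<Rightarrow> 'a \<Rightarrow> real) \<Rightarrow> ('m \<Rightarrow> 'a \<Rightarrow> 'a) \<Rightarrow>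
   'n \<Rightarrow> nat \<Rightarrow> 'a" where
  "pd_estimate W R \<eta> \<alpha> Df g Dg i T =
     (1 / (\<Sum>t<T. \<alpha> t)) *\<^sub>R (\<Sum>t<T. \<alpha> t *\<^sub>R fst (pd_iter W R \<eta> \<alpha> Df g Dg t) i)"

end

(*
  The squared distances of the primal iterates to xstar plus the squared norms of the
  multipliers form a Lyapunov function: since projection and averaging with a doubly
  stochastic W are nonexpansive and the regularisation keeps every multiplier below
  2LR/eta, one step decreases it by 2 alpha(t) (sum_j f_j(x_j(t)) - n f(xstar)) up to an
  error of order alpha(t)^2.  The disagreement x_i(t) - xbar(t) is the sum of the past
  step perturbations, centred and propagated by powers of W; on sum-zero vectors W
  contracts by sigma_2(W), because a maximiser of |W v| on that subspace is an
  eigenvector of W^T W whose eigenvalue, together with the eigenvalue 1 of the constant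
  vector, gives two roots of the characteristic polynomial.  By convexity and the
  Lipschitz bound both estimates pass to the weighted average xhat_i(T), and for
  alpha(t) = R / sqrt(t+1) the sums of alpha and alpha^2 are at least 2R(sqrt T - 1)
  and at most R^2 (1 + ln T).
*)
theory Submission
  imports Defs "HOL-Analysis.Harmonic_Numbers"
begin

lemma power2_norm_add_scaleR:
  fixes a b :: "'a::real_inner"
  shows "(norm (a + t *\<^sub>R b))\<^sup>2 = (norm a)\<^sup>2 + 2 * t * inner a b + t\<^sup>2 * (norm b)\<^sup>2"
  unfolding power2_norm_eq_inner
  by (simp add: inner_add_left inner_add_right inner_commute[of b a] power2_eq_square algebra_simps)

lemma power2_norm_convex_combination_le:
  fixes w :: "'j \<Rightarrow> real" and z :: "'j \<Rightarrow> 'b::real_inner"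
  assumes "finite S" "\<And>j. j \<in> S \<Longrightarrow> 0 \<le> w j" "sum w S = 1"
  shows "(norm (\<Sum>j\<in>S. w j *\<^sub>R z j))\<^sup>2 \<le> (\<Sum>j\<in>S. w j * (norm (z j))\<^sup>2)"
proof -
  define c where "c = (\<Sum>j\<in>S. w j *\<^sub>R z j)"
  have "0 \<le> (\<Sum>j\<in>S. w j * (norm (z j - c))\<^sup>2)"
    using assms by (intro sum_nonneg) auto
  also have "\<dots> = (\<Sum>j\<in>S. w j * (norm (z j))\<^sup>2) - 2 * (\<Sum>j\<in>S. w j * inner (z j) c)
                  + (\<Sum>j\<in>S. w j) * (norm c)\<^sup>2"
    by (simp add: power2_norm_eq_inner inner_diff_left inner_diff_right inner_commute algebra_simps
        sum_distrib_left sum_distrib_right sum_subtractf sum.distrib)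
  also have "(\<Sum>j\<in>S. w j * inner (z j) c) = inner c c"
    by (simp add: c_def inner_sum_left)
  finally show ?thesis
    using assms by (simp add: c_def power2_norm_eq_inner)
qed

lemma norm_convex_combination_le:
  fixes w :: "'j \<Rightarrow> real" and z :: "'j \<Rightarrow> 'b::real_normed_vector"
  assumes "finite S" "\<And>j. j \<in> S \<Longrightarrow> 0 \<le> w j" "sum w S = 1" "\<And>j. j \<in> S \<Longrightarrow> norm (z j) \<le> B"
  shows "norm (\<Sum>j\<in>S. w j *\<^sub>R z j) \<le> B"
proof -
  have "norm (\<Sum>j\<in>S. w j *\<^sub>R z j) \<le> (\<Sum>j\<in>S. w j * B)"
    using assms by (intro order_trans[OF norm_sum] sum_mono) (simp add: mult_left_mono)
  also have "\<dots> = B"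
    using assms by (simp add: sum_distrib_right[symmetric])
  finally show ?thesis .
qed

lemma power2_norm_vec_sum: "(norm (v::real^'n::finite))\<^sup>2 = (\<Sum>i\<in>UNIV. (v $ i)\<^sup>2)"
  unfolding power2_norm_eq_inner by (simp add: inner_vec_def power2_eq_square)

lemma power2_norm_Basis_sum: "(norm x)\<^sup>2 = (\<Sum>b\<in>Basis. (inner x b)\<^sup>2)"
  for x :: "'a::euclidean_space"
  unfolding power2_norm_eq_inner by (subst euclidean_inner) (simp add: power2_eq_square)

text \<open>For small \<open>t\<close> of the sign of \<open>a\<close> the linear term dominates.\<close>
lemma linear_coeff_eq_0_if_quadratic_nonpos:
  fixes a b :: real
  assumes nonpos: "\<And>t. 2 * t * a + t\<^sup>2 * b \<le> 0"
  shows "a = 0"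
proof (rule ccontr)
  assume "a \<noteq> 0"
  define B where "B = \<bar>b\<bar> + 1"
  define t where "t = a / (2 * B)"
  have B: "B > 0" "t\<^sup>2 * (- B) \<le> t\<^sup>2 * b"
    by (auto simp: B_def intro!: mult_left_mono)
  have "2 * t * a - t\<^sup>2 * B = 3 * a\<^sup>2 / (4 * B)"
    using B by (simp add: t_def power2_eq_square field_simps)
  moreover have "3 * a\<^sup>2 / (4 * B) > 0"
    using \<open>a \<noteq> 0\<close> B by simp
  ultimately show False
    using nonpos[of t] B by linarith
qed

lemma sum_lessThan_triangle_swap:
  fixes f :: "nat \<Rightarrow> nat \<Rightarrow> 'b::comm_monoid_add"
  shows "(\<Sum>t<T. \<Sum>s<t. f s t) = (\<Sum>s<T. \<Sum>t\<in>{Suc s..<T}. f s t)"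
proof (induction T)
  case (Suc T)
  have "(\<Sum>s<Suc T. \<Sum>t\<in>{Suc s..<Suc T}. f s t) = (\<Sum>s<T. f s T + (\<Sum>t\<in>{Suc s..<T}. f s t))"
    by (simp add: atLeastLessThanSuc)
  then show ?case
    using Suc by (simp add: sum.distrib)
qed simp

lemma closest_point_nonneg_orthant:
  fixes v :: "real^'m::finite"
  shows "closest_point nonneg_orthant v = (\<chi> k. max 0 (v $ k))"
proof (rule closest_point_unique[symmetric])
  show "convex (nonneg_orthant :: (real^'m) set)"
    unfolding convex_def nonneg_orthant_def by simp
  show "closed (nonneg_orthant :: (real^'m) set)"
    unfolding nonneg_orthant_def by (rule closed_positive_orthant)
  show "(\<chi> k. max 0 (v $ k)) \<in> nonneg_orthant"
    by (simp add: nonneg_orthant_def)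
  show "\<forall>z\<in>nonneg_orthant. dist v (\<chi> k. max 0 (v $ k)) \<le> dist v z"
  proof
    fix z :: "real^'m"
    assume "z \<in> nonneg_orthant"
    then have "(v $ k - max 0 (v $ k))\<^sup>2 \<le> (v $ k - z $ k)\<^sup>2" for k
    proof (cases "0 \<le> v $ k")
      case False
      have "0 \<le> z $ k"
        using \<open>z \<in> nonneg_orthant\<close> by (simp add: nonneg_orthant_def)
      have "(v $ k - z $ k)\<^sup>2 - (v $ k)\<^sup>2 = z $ k * (z $ k - 2 * v $ k)"
        by (simp add: power2_eq_square algebra_simps)
      also have "\<dots> \<ge> 0"
        using \<open>0 \<le> z $ k\<close> False by simp
      finally show ?thesis
        using False by simp
    qed simp
    then have "(dist v (\<chi> k. max 0 (v $ k)))\<^sup>2 \<le> (dist v z)\<^sup>2"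
      unfolding dist_norm power2_norm_vec_sum by (auto intro!: sum_mono)
    then show "dist v (\<chi> k. max 0 (v $ k)) \<le> dist v z"
      by (simp add: power_mono_iff)
  qed
qed

section \<open>Characteristic polynomials and the second singular value\<close>

lemma poly_det: "poly (det M) x = det (\<chi> i j. poly (M $ i $ j) x)"
  for M :: "'a::comm_ring_1 poly^'n::finite^'n"
  by (simp add: det_def poly_sum poly_prod)

lemma poly_charpoly: "poly (charpoly A) x = det (mat x - A)"
  unfolding charpoly_def poly_det
  by (rule arg_cong[where f=det]) (simp add: vec_eq_iff mat_def)

lemma det_eq_0_iff_kernel:
  fixes M :: "real^'n::finite^'n"
  shows "det M = 0 \<longleftrightarrow> (\<exists>w. w \<noteq> 0 \<and> M *v w = 0)"
  using invertible_det_nz[of M] invertible_left_inverse[of M] matrix_left_invertible_ker[of M]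
  by auto

lemma mat_minus_mult_vector: "(mat x - A) *v w = x *\<^sub>R w - A *v (w::real^'n::finite)"
  by (simp add: matrix_vector_mult_diff_rdistrib)
    (simp add: vec_eq_iff matrix_vector_mult_def mat_def if_distrib if_distribR cong: if_cong)

lemma charpoly_root_iff_eigenvalue:
  fixes A :: "real^'n::finite^'n"
  shows "poly (charpoly A) c = 0 \<longleftrightarrow> (\<exists>w. w \<noteq> 0 \<and> A *v w = c *\<^sub>R w)"
  unfolding poly_charpoly det_eq_0_iff_kernel mat_minus_mult_vector by auto

lemma charpoly_similar:
  fixes A P Q :: "real^'n::finite^'n"
  assumes "Q ** P = mat 1"
  shows "charpoly (Q ** A ** P) = charpoly A"
proof (rule poly_eq_poly_eq_iff[THEN iffD1, OF ext])
  fix x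
  have mat_x: "mat x = x *\<^sub>R (mat 1 :: real^'n^'n)"
    by (simp add: vec_eq_iff mat_def)
  have "C ** (D - E) = C ** D - C ** E" "(D - E) ** C = D ** C - E ** C"
    for C D E :: "real^'n^'n"
    by (simp_all add: vec_eq_iff matrix_matrix_mult_def sum_subtractf algebra_simps)
  then have "Q ** (mat x - A) ** P = mat x - Q ** A ** P"
    by (subst (1 2) mat_x)
      (simp add: matrix_scalar_ac scalar_matrix_assoc[symmetric] assms matrix_mul_assoc)
  then have "det (mat x - Q ** A ** P) = det Q * det P * det (mat x - A)"
    by (metis det_mul mult.commute mult.left_commute)
  also have "det Q * det P = 1"
    using det_mul[of Q P] assms by simp
  finally show "poly (charpoly (Q ** A ** P)) x = poly (charpoly A) x"
    by (simp add: poly_charpoly)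
qed

lemma charpoly_double_root_1_of_fixed_axes:
  fixes B :: "real^'n::finite^'n"
  assumes fixed: "B *v axis i1 1 = axis i1 1" "B *v axis i2 1 = axis i2 1" and "i1 \<noteq> i2"
  shows "[:-1, 1:]^2 dvd charpoly B"
proof -
  define T where "T = transpose (\<chi> i j. (if i = j then [:0, 1:] else 0) - [:B $ i $ j:])"
  have X_minus_1: "[:0, 1:] - 1 = [:-1, 1 :: real:]" "pCons 0 1 - 1 = [:-1, 1 :: real:]"
    by (simp_all add: one_pCons)
  have column: "B $ r $ c = (if r = c then 1 else 0)" if "c \<in> {i1, i2}" for r c
  proof -
    have "B $ r $ c = column c B $ r"
      by (simp add: column_def)
    also have "column c B = axis c 1"
      using that fixed by (auto simp flip: matrix_vector_mult_basis)
    finally show ?thesis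
      by (simp add: axis_def)
  qed
  have "charpoly B = det T"
    unfolding charpoly_def T_def det_transpose ..
  also have "det T = [:-1, 1:] * det (\<chi> i. if i = i1 then axis i1 1 else row i T)"
  proof -
    have T_row: "T = (\<chi> i. if i = i1 then [:-1, 1:] *s axis i1 1 else row i T)"
      by (simp add: vec_eq_iff T_def transpose_def column axis_def row_def X_minus_1)
    show ?thesis
      by (subst T_row) (rule det_row_mul)
  qed
  also have "det (\<chi> i. if i = i1 then axis i1 1 else row i T)
      = [:-1, 1:] * det (\<chi> i. if i = i2 then axis i2 1 else if i = i1 then axis i1 1 else row i T)"
  proof -
    have T_row: "(\<chi> i. if i = i1 then axis i1 1 else row i T)
        = (\<chi> i. if i = i2 then [:-1, 1:] *s axis i2 1 else if i = i1 then axis i1 1 else row i T)"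
      using \<open>i1 \<noteq> i2\<close> by (simp add: vec_eq_iff T_def transpose_def column axis_def row_def X_minus_1)
    show ?thesis
      by (subst T_row) (rule det_row_mul)
  qed
  finally have "charpoly B = [:-1, 1:]^2
      * det (\<chi> i. if i = i2 then axis i2 1 else if i = i1 then axis i1 1 else row i T)"
    by (simp only: power2_eq_square mult.assoc)
  then show ?thesis
    by (rule dvdI)
qed

lemma left_invertible_identity_with_columns_one_and_v:
  fixes v :: "real^'n::finite"
  assumes nonconstant: "v $ i1 \<noteq> v $ i2"
  shows "\<exists>Q. Q ** (\<chi> r c. if c = i1 then 1 else if c = i2 then v $ r else if r = c then 1 else 0) = mat 1"
    (is "\<exists>Q. Q ** ?P = mat 1")
proof -
  have "i1 \<noteq> i2"
    using nonconstant by auto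
  have "z = 0" if "?P *v z = 0" for z
  proof -
    have P_z: "(?P *v z) $ r = z $ i1 + v $ r * z $ i2 + (if r \<noteq> i1 \<and> r \<noteq> i2 then z $ r else 0)" for r
    proof -
      have "(?P *v z) $ r = (\<Sum>c\<in>UNIV. (if c = i1 then z $ i1 else 0) + (if c = i2 then v $ r * z $ i2 else 0)
                     + (if c = r then (if r \<noteq> i1 \<and> r \<noteq> i2 then z $ r else 0) else 0))"
        unfolding matrix_vector_mult_def by (auto intro!: sum.cong simp: \<open>i1 \<noteq> i2\<close>)
      then show ?thesis
        by (simp add: sum.distrib)
    qed
    have eqs: "z $ i1 + v $ i1 * z $ i2 = 0" "z $ i1 + v $ i2 * z $ i2 = 0"
      using P_z[of i1] P_z[of i2] that \<open>i1 \<noteq> i2\<close> by simp_all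
    moreover have "(v $ i1 - v $ i2) * z $ i2 = (z $ i1 + v $ i1 * z $ i2) - (z $ i1 + v $ i2 * z $ i2)"
      by (simp add: algebra_simps)
    ultimately have "z $ i2 = 0"
      using nonconstant by simp
    with eqs have "z $ i1 = 0"
      by simp
    show "z = 0"
    proof (rule vec_eq_iff[THEN iffD2, rule_format])
      fix r
      show "z $ r = 0 $ r"
        using P_z[of r] that \<open>z $ i1 = 0\<close> \<open>z $ i2 = 0\<close> by (cases "r = i1 \<or> r = i2") auto
    qed
  qed
  then show ?thesis
    using matrix_left_invertible_ker by blast
qed

text \<open>Conjugating by the matrix of the previous lemma turns \<open>\<one>\<close> and \<open>v\<close> into the axes \<open>i1\<close>, \<open>i2\<close>.\<close>
lemma charpoly_double_root_1_of_fixed_vectors: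
  fixes A :: "real^'n::finite^'n"
  assumes fixes_one: "A *v (\<chi> i. 1) = (\<chi> i. 1)" and fixes_v: "A *v v = v"
    and nonconstant: "v $ i1 \<noteq> v $ i2"
  shows "[:-1, 1:]^2 dvd charpoly A"
proof -
  have "i1 \<noteq> i2"
    using nonconstant by auto
  define P :: "real^'n^'n" where
    "P = (\<chi> r c. if c = i1 then 1 else if c = i2 then v $ r else if r = c then 1 else 0)"
  obtain Q where QP: "Q ** P = mat 1"
    using left_invertible_identity_with_columns_one_and_v[OF nonconstant] unfolding P_def by blast
  have P_axes: "P *v axis i1 1 = (\<chi> i. 1)" "P *v axis i2 1 = v"
    using \<open>i1 \<noteq> i2\<close> by (simp_all add: matrix_vector_mult_basis column_def P_def vec_eq_iff)
  have "(Q ** A ** P) *v axis c 1 = axis c 1" if "c = i1 \<or> c = i2" for c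
  proof -
    have "A *v (P *v axis c 1) = P *v axis c 1"
      using that P_axes fixes_one fixes_v by auto
    then have "(Q ** A ** P) *v axis c 1 = (Q ** P) *v axis c 1"
      by (metis matrix_vector_mul_assoc)
    then show ?thesis
      by (simp add: QP)
  qed
  then have "[:-1, 1:]^2 dvd charpoly (Q ** A ** P)"
    using charpoly_double_root_1_of_fixed_axes \<open>i1 \<noteq> i2\<close> by blast
  then show ?thesis
    by (simp add: charpoly_similar QP)
qed

lemma sigma2_ge_if_two_roots_ge:
  fixes A :: "real^'n::finite^'n"
  assumes two_roots: "2 \<le> size (filter_mset (\<lambda>y. \<mu> \<le> y) (proots (charpoly (transpose A ** A))))"
    and "0 \<le> \<mu>"
  shows "\<mu> \<le> (sigma2 A)\<^sup>2"
proof -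
  define s where "s = sorted_list_of_multiset (proots (charpoly (transpose A ** A)))"
  define K where "K = length s"
  have "length (filter (\<lambda>y. \<mu> \<le> y) s) = size (filter_mset (\<lambda>y. \<mu> \<le> y) (mset s))"
    by (metis mset_filter size_mset)
  then have two_le: "2 \<le> length (filter (\<lambda>y. \<mu> \<le> y) s)"
    using two_roots by (simp add: s_def)
  then have "2 \<le> K"
    unfolding K_def using length_filter_le order_trans by blast
  then have sigma2_eq: "sigma2 A = sqrt (s ! (K - 2))"
    by (simp add: sigma2_def singular_values_def s_def[symmetric] K_def rev_nth numeral_2_eq_2)
  have "\<mu> \<le> s ! (K - 2)"
  proof (rule ccontr)
    assume "\<not> \<mu> \<le> s ! (K - 2)"
    moreover have "sorted s"
      by (simp add: s_def)
    moreover have "K - 2 < length s"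
      using \<open>2 \<le> K\<close> by (simp add: K_def)
    ultimately have "i = K - 1" if "i < length s" "\<mu> \<le> s ! i" for i
      using that sorted_nth_mono[of s i "K - 2"] by (cases "i \<le> K - 2") (auto simp: K_def)
    then have "{i. i < length s \<and> \<mu> \<le> s ! i} \<subseteq> {K - 1}"
      by blast
    then have "card {i. i < length s \<and> \<mu> \<le> s ! i} \<le> 1"
      using card_mono[of "{K - 1}"] by fastforce
    then show False
      using two_le by (simp add: length_filter_conv_card)
  qed
  then show ?thesis
    using sigma2_eq \<open>0 \<le> \<mu>\<close> by simp
qed

section \<open>Doubly stochastic matrices\<close>

lemma nonconstant_if_sum_zero:
  fixes v :: "real^'n::finite"
  assumes "v \<noteq> 0" "(\<Sum>i\<in>UNIV. v $ i) = 0"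
  shows "\<exists>i1 i2. v $ i1 \<noteq> v $ i2"
proof (rule ccontr)
  assume "\<not> (\<exists>i1 i2. v $ i1 \<noteq> v $ i2)"
  then have all_equal: "v $ i = v $ k" for i k
    by auto
  obtain k where "v $ k \<noteq> 0"
    using \<open>v \<noteq> 0\<close> by (auto simp: vec_eq_iff)
  moreover have "(\<Sum>i\<in>UNIV. v $ i) = of_nat CARD('n) * v $ k"
    by (subst all_equal[of _ k]) simp
  ultimately show False
    using assms(2) by simp
qed

lemma exists_maximizer_on_sum_zero_sphere:
  fixes A :: "real^'n::finite^'m::finite" and v :: "real^'n"
  assumes "(\<Sum>i\<in>UNIV. v $ i) = 0" "v \<noteq> 0"
  obtains v0 where "(\<Sum>i\<in>UNIV. v0 $ i) = 0" "norm v0 = 1"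
    "\<And>y. (\<Sum>i\<in>UNIV. y $ i) = 0 \<Longrightarrow> (norm (A *v y))\<^sup>2 \<le> (norm (A *v v0))\<^sup>2 * (norm y)\<^sup>2"
proof -
  define Z where "Z = {v::real^'n. inner (\<chi> i. 1) v = 0} \<inter> sphere 0 1"
  have sum_eq_inner: "(\<Sum>i\<in>UNIV. y $ i) = inner (\<chi> i. 1) y" for y :: "real^'n"
    by (simp add: inner_vec_def)
  have normalized_in_Z: "(1 / norm y) *\<^sub>R y \<in> Z" if "(\<Sum>i\<in>UNIV. y $ i) = 0" "y \<noteq> 0" for y
    using that by (simp add: Z_def sum_eq_inner[symmetric] sum_divide_distrib[symmetric])
  have "compact Z"
    unfolding Z_def by (intro closed_Int_compact compact_sphere closed_hyperplane)
  moreover have "Z \<noteq> {}"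
    using normalized_in_Z[OF assms] by blast
  moreover have "continuous_on Z (\<lambda>v. (norm (A *v v))\<^sup>2)"
    by (intro continuous_intros linear_continuous_on matrix_vector_mul_bounded_linear)
  ultimately have "\<exists>v0\<in>Z. \<forall>y\<in>Z. (norm (A *v y))\<^sup>2 \<le> (norm (A *v v0))\<^sup>2"
    by (rule continuous_attains_sup)
  then obtain v0 where v0: "v0 \<in> Z" "\<And>y. y \<in> Z \<Longrightarrow> (norm (A *v y))\<^sup>2 \<le> (norm (A *v v0))\<^sup>2"
    by blast
  then have "(\<Sum>i\<in>UNIV. v0 $ i) = 0" "norm v0 = 1"
    by (simp_all add: Z_def sum_eq_inner)
  moreover have "(norm (A *v y))\<^sup>2 \<le> (norm (A *v v0))\<^sup>2 * (norm y)\<^sup>2" if "(\<Sum>i\<in>UNIV. y $ i) = 0" for y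
  proof (cases "y = 0")
    case False
    have "(norm (A *v ((1 / norm y) *\<^sub>R y)))\<^sup>2 \<le> (norm (A *v v0))\<^sup>2"
      using v0(2) normalized_in_Z[OF that False] by blast
    then have "(norm (A *v y))\<^sup>2 / (norm y)\<^sup>2 \<le> (norm (A *v v0))\<^sup>2"
      by (simp add: matrix_vector_mult_scaleR power_divide)
    then show ?thesis
      using False by (simp add: field_simps)
  qed simp
  ultimately show ?thesis
    using that by blast
qed

locale doubly_stochastic =
  fixes W :: "real^'n::finite^'n"
  assumes nonneg: "\<And>a b. 0 \<le> W $ a $ b"
    and row_sum: "\<And>a. (\<Sum>b\<in>UNIV. W $ a $ b) = 1"
    and column_sum: "\<And>b. (\<Sum>a\<in>UNIV. W $ a $ b) = 1"
begin

definition consensus :: "('n \<Rightarrow> 'a::real_vector) \<Rightarrow> 'n \<Rightarrow> 'a" where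
  "consensus u i = (\<Sum>j\<in>UNIV. W $ i $ j *\<^sub>R u j)"

lemma sum_consensus: "(\<Sum>i\<in>UNIV. consensus u i) = (\<Sum>j\<in>UNIV. u j)"
  unfolding consensus_def by (subst sum.swap) (simp add: column_sum flip: scaleR_sum_left)

lemma consensus_diff_const: "consensus (\<lambda>j. u j - c) i = consensus u i - c"
  by (simp add: consensus_def scaleR_diff_right sum_subtractf row_sum flip: scaleR_sum_left)

lemma consensus_sum: "consensus (\<lambda>i. \<Sum>s\<in>S. f s i) i = (\<Sum>s\<in>S. consensus (f s) i)"
  unfolding consensus_def by (simp add: scaleR_sum_right) (rule sum.swap)

lemma norm_consensus_le: "(\<And>j. norm (u j) \<le> B) \<Longrightarrow> norm (consensus u i) \<le> B"
  unfolding consensus_def by (rule norm_convex_combination_le) (auto simp: nonneg row_sum)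

lemma consensus_in_convex: "convex S \<Longrightarrow> (\<And>j. u j \<in> S) \<Longrightarrow> consensus u i \<in> S"
  unfolding consensus_def by (rule convex_sum) (auto simp: nonneg row_sum)

lemma sum_power2_norm_consensus_le:
  fixes u :: "'n \<Rightarrow> 'a::real_inner"
  shows "(\<Sum>i\<in>UNIV. (norm (consensus u i))\<^sup>2) \<le> (\<Sum>j\<in>UNIV. (norm (u j))\<^sup>2)"
proof -
  have "(\<Sum>i\<in>UNIV. (norm (consensus u i))\<^sup>2) \<le> (\<Sum>i\<in>UNIV. \<Sum>j\<in>UNIV. W $ i $ j * (norm (u j))\<^sup>2)"
    unfolding consensus_def
    by (intro sum_mono power2_norm_convex_combination_le) (auto simp: nonneg row_sum)
  also have "\<dots> = (\<Sum>j\<in>UNIV. (norm (u j))\<^sup>2)"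
    by (subst sum.swap) (simp add: column_sum flip: sum_distrib_right)
  finally show ?thesis .
qed

lemma matrix_vector_mult_eq_consensus: "(W *v v) $ i = consensus (\<lambda>j. v $ j) i"
  by (simp add: consensus_def matrix_vector_mult_def)

lemma power2_norm_matrix_vector_mult_le: "(norm (W *v v))\<^sup>2 \<le> (norm v)\<^sup>2"
  using sum_power2_norm_consensus_le[of "\<lambda>j. v $ j"]
  by (simp add: power2_norm_vec_sum matrix_vector_mult_eq_consensus)

lemma inner_gram: "inner x ((transpose W ** W) *v y) = inner (W *v x) (W *v y)"
  by (metis dot_lmul_matrix inner_commute matrix_vector_mul_assoc vector_transpose_matrix)

lemma sum_matrix_vector_mult: "(\<Sum>i\<in>UNIV. (W *v v) $ i) = (\<Sum>i\<in>UNIV. v $ i)"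
  by (simp add: matrix_vector_mult_eq_consensus sum_consensus)

lemma sum_transpose_matrix_vector_mult: "(\<Sum>i\<in>UNIV. (transpose W *v v) $ i) = (\<Sum>i\<in>UNIV. v $ i)"
  unfolding matrix_vector_mult_def transpose_def
  by (simp add: sum.swap[of _ UNIV UNIV] row_sum flip: sum_distrib_right)

lemma sum_gram_mult: "(\<Sum>i\<in>UNIV. ((transpose W ** W) *v v) $ i) = (\<Sum>i\<in>UNIV. v $ i)"
  by (simp only: sum_transpose_matrix_vector_mult sum_matrix_vector_mult flip: matrix_vector_mul_assoc)

lemma gram_one: "(transpose W ** W) *v (\<chi> i. 1) = (\<chi> i. 1)"
proof -
  have "W *v (\<chi> i. 1) = (\<chi> i. 1)" "transpose W *v (\<chi> i. 1) = (\<chi> i. 1)"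
    by (simp_all add: vec_eq_iff matrix_vector_mult_def transpose_def row_sum column_sum)
  then show ?thesis
    by (simp flip: matrix_vector_mul_assoc)
qed

lemma gram_eigenvalue_bounds:
  assumes "w \<noteq> 0" "(transpose W ** W) *v w = c *\<^sub>R w"
  shows "0 \<le> c" "c \<le> 1"
proof -
  have "c * (norm w)\<^sup>2 = (norm (W *v w))\<^sup>2"
    using inner_gram[of w w] assms(2) by (simp add: power2_norm_eq_inner)
  moreover have "(norm w)\<^sup>2 > 0"
    using assms(1) by simp
  moreover have "(norm (W *v w))\<^sup>2 \<le> 1 * (norm w)\<^sup>2"
    using power2_norm_matrix_vector_mult_le[of w] by simp
  ultimately show "0 \<le> c" "c \<le> 1"
    using zero_le_mult_iff[of c "(norm w)\<^sup>2"] mult_le_cancel_right_pos[of "(norm w)\<^sup>2" c 1]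
    by auto
qed

lemma charpoly_gram_nonzero: "charpoly (transpose W ** W) \<noteq> 0"
proof
  assume "charpoly (transpose W ** W) = 0"
  then obtain w where "w \<noteq> 0" "(transpose W ** W) *v w = 2 *\<^sub>R w"
    using charpoly_root_iff_eigenvalue[of "transpose W ** W" 2] by auto
  then show False
    using gram_eigenvalue_bounds(2) by fastforce
qed

lemma proots_gram_iff:
  "c \<in># proots (charpoly (transpose W ** W)) \<longleftrightarrow> (\<exists>w. w \<noteq> 0 \<and> (transpose W ** W) *v w = c *\<^sub>R w)"
  using charpoly_gram_nonzero charpoly_root_iff_eigenvalue by simp

lemma sigma2_nonneg: "0 \<le> sigma2 W"
proof -
  define s where "s = sorted_list_of_multiset (proots (charpoly (transpose W ** W)))"
  have "0 \<le> rev s ! 1" if "2 \<le> length s"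
  proof -
    have "rev s ! 1 \<in># proots (charpoly (transpose W ** W))"
      using that nth_mem[of 1 "rev s"] by (simp add: s_def)
    then show ?thesis
      using gram_eigenvalue_bounds(1) proots_gram_iff by blast
  qed
  then show ?thesis
    by (simp add: sigma2_def singular_values_def s_def[symmetric])
qed

text \<open>The residual \<open>r\<close> is orthogonal to the hyperplane \<open>\<Sum>v = 0\<close> by the first-order condition at
  the maximiser, and lies in it.\<close>
lemma gram_eigenvector_of_maximizer:
  assumes v0_sum: "(\<Sum>i\<in>UNIV. v0 $ i) = 0" and "norm v0 = 1"
    and maximal: "\<And>y. (\<Sum>i\<in>UNIV. y $ i) = 0 \<Longrightarrow> (norm (W *v y))\<^sup>2 \<le> (norm (W *v v0))\<^sup>2 * (norm y)\<^sup>2"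
  shows "(transpose W ** W) *v v0 = (norm (W *v v0))\<^sup>2 *\<^sub>R v0"
proof -
  define \<mu> where "\<mu> = (norm (W *v v0))\<^sup>2"
  define r where "r = (transpose W ** W) *v v0 - \<mu> *\<^sub>R v0"
  have orthogonal: "inner r w = 0" if w_sum: "(\<Sum>i\<in>UNIV. w $ i) = 0" for w
  proof (rule linear_coeff_eq_0_if_quadratic_nonpos)
    fix t :: real
    have "(\<Sum>i\<in>UNIV. (v0 + t *\<^sub>R w) $ i) = 0"
      using v0_sum w_sum by (simp add: sum.distrib flip: sum_distrib_left)
    then have "(norm (W *v (v0 + t *\<^sub>R w)))\<^sup>2 \<le> \<mu> * (norm (v0 + t *\<^sub>R w))\<^sup>2"
      using maximal unfolding \<mu>_def by blast
    moreover have "(norm (W *v (v0 + t *\<^sub>R w)))\<^sup>2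
        = \<mu> + 2 * t * inner (W *v v0) (W *v w) + t\<^sup>2 * (norm (W *v w))\<^sup>2"
      by (simp add: matrix_vector_right_distrib matrix_vector_mult_scaleR power2_norm_add_scaleR \<mu>_def)
    moreover have "(norm (v0 + t *\<^sub>R w))\<^sup>2 = 1 + 2 * t * inner v0 w + t\<^sup>2 * (norm w)\<^sup>2"
      using \<open>norm v0 = 1\<close> by (simp add: power2_norm_add_scaleR)
    moreover have "inner (W *v v0) (W *v w) = inner r w + \<mu> * inner v0 w"
    proof -
      have "inner r w = inner ((transpose W ** W) *v v0) w - \<mu> * inner v0 w"
        by (simp add: r_def inner_diff_left)
      moreover have "inner ((transpose W ** W) *v v0) w = inner (W *v v0) (W *v w)"
        using inner_gram[of w v0] by (simp add: inner_commute)
      ultimately show ?thesis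
        by linarith
    qed
    ultimately have "\<mu> + 2 * t * (inner r w + \<mu> * inner v0 w) + t\<^sup>2 * (norm (W *v w))\<^sup>2
        \<le> \<mu> * (1 + 2 * t * inner v0 w + t\<^sup>2 * (norm w)\<^sup>2)"
      by simp
    then show "2 * t * inner r w + t\<^sup>2 * ((norm (W *v w))\<^sup>2 - \<mu> * (norm w)\<^sup>2) \<le> 0"
      by (simp add: algebra_simps)
  qed
  have "(\<Sum>i\<in>UNIV. r $ i) = 0"
    using v0_sum by (simp add: r_def sum_subtractf sum_gram_mult flip: sum_distrib_left)
  then have "r = 0"
    using orthogonal[of r] by simp
  then show ?thesis
    by (simp add: r_def \<mu>_def)
qed

text \<open>The eigenvalue \<open>\<mu>\<close> of \<open>v0 \<bottom> \<one>\<close> and the eigenvalue \<open>1\<close> of \<open>\<one>\<close> are two roots \<open>\<ge> \<mu>\<close> of the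
  characteristic polynomial, counted with multiplicity also when \<open>\<mu> = 1\<close>.\<close>
lemma gram_eigenvalue_le_sigma2:
  assumes "v0 \<noteq> 0" and v0_sum: "(\<Sum>i\<in>UNIV. v0 $ i) = 0"
    and eigen: "(transpose W ** W) *v v0 = \<mu> *\<^sub>R v0"
  shows "\<mu> \<le> (sigma2 W)\<^sup>2"
proof (rule sigma2_ge_if_two_roots_ge)
  define p where "p = charpoly (transpose W ** W)"
  have "0 \<le> \<mu>" "\<mu> \<le> 1"
    using gram_eigenvalue_bounds[OF \<open>v0 \<noteq> 0\<close> eigen] by auto
  then show "0 \<le> \<mu>"
    by simp
  have "{#\<mu>, 1#} \<subseteq># proots p"
  proof (cases "\<mu> = 1")
    case False
    have "\<mu> \<in># proots p"
      unfolding p_def proots_gram_iff using \<open>v0 \<noteq> 0\<close> eigen by blast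
    moreover have "1 \<in># proots p"
      unfolding p_def proots_gram_iff by (intro exI[of _ "\<chi> i. 1"]) (simp add: vec_eq_iff gram_one)
    ultimately show ?thesis
      using False by (simp add: insert_subset_eq_iff in_diff_count)
  next
    case True
    obtain i1 i2 where "v0 $ i1 \<noteq> v0 $ i2"
      using nonconstant_if_sum_zero[OF \<open>v0 \<noteq> 0\<close> v0_sum] by blast
    then have "[:-1, 1:]^2 dvd p"
      using charpoly_double_root_1_of_fixed_vectors[OF gram_one] eigen True by (simp add: p_def)
    then have "2 \<le> order 1 p"
      using order_divides[of 1 2 p] charpoly_gram_nonzero by (simp add: p_def)
    then show ?thesis
      using True charpoly_gram_nonzero by (simp add: p_def subseteq_mset_def)
  qed
  then have "size (filter_mset (\<lambda>y. \<mu> \<le> y) {#\<mu>, 1#}) \<le> size (filter_mset (\<lambda>y. \<mu> \<le> y) (proots p))"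
    by (intro size_mset_mono multiset_filter_mono)
  then show "2 \<le> size (filter_mset (\<lambda>y. \<mu> \<le> y) (proots (charpoly (transpose W ** W))))"
    using \<open>\<mu> \<le> 1\<close> by (simp add: p_def)
qed

lemma power2_norm_matrix_vector_mult_sum_zero_le:
  assumes "(\<Sum>i\<in>UNIV. v $ i) = 0"
  shows "(norm (W *v v))\<^sup>2 \<le> (sigma2 W)\<^sup>2 * (norm v)\<^sup>2"
proof (cases "v = 0")
  case False
  then obtain v0 where v0: "(\<Sum>i\<in>UNIV. v0 $ i) = 0" "norm v0 = 1"
    and maximal: "\<And>y. (\<Sum>i\<in>UNIV. y $ i) = 0 \<Longrightarrow> (norm (W *v y))\<^sup>2 \<le> (norm (W *v v0))\<^sup>2 * (norm y)\<^sup>2"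
    using exists_maximizer_on_sum_zero_sphere assms by metis
  have "(transpose W ** W) *v v0 = (norm (W *v v0))\<^sup>2 *\<^sub>R v0"
    using v0 maximal by (rule gram_eigenvector_of_maximizer)
  moreover have "v0 \<noteq> 0"
    using v0(2) by auto
  ultimately have "(norm (W *v v0))\<^sup>2 \<le> (sigma2 W)\<^sup>2"
    using gram_eigenvalue_le_sigma2 v0(1) by blast
  then show ?thesis
    using maximal[OF assms] by (meson mult_right_mono order_trans zero_le_power2)
qed simp

lemma sum_power2_norm_consensus_sum_zero_le:
  fixes u :: "'n \<Rightarrow> 'a::euclidean_space"
  assumes "(\<Sum>i\<in>UNIV. u i) = 0"
  shows "(\<Sum>i\<in>UNIV. (norm (consensus u i))\<^sup>2) \<le> (sigma2 W)\<^sup>2 * (\<Sum>i\<in>UNIV. (norm (u i))\<^sup>2)"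
proof -
  define w where "w b = (\<chi> j. inner (u j) b)" for b
  have "(\<Sum>j\<in>UNIV. w b $ j) = 0" for b
    using assms by (simp add: w_def flip: inner_sum_left)
  then have "(norm (W *v w b))\<^sup>2 \<le> (sigma2 W)\<^sup>2 * (norm (w b))\<^sup>2" for b
    by (rule power2_norm_matrix_vector_mult_sum_zero_le)
  moreover have "(W *v w b) $ i = inner (consensus u i) b" for b i
    by (simp add: w_def consensus_def matrix_vector_mult_def inner_sum_left)
  ultimately have "(\<Sum>b\<in>Basis. \<Sum>i\<in>UNIV. (inner (consensus u i) b)\<^sup>2)
      \<le> (\<Sum>b\<in>Basis. (sigma2 W)\<^sup>2 * (\<Sum>i\<in>UNIV. (inner (u i) b)\<^sup>2))"
    by (intro sum_mono) (simp add: power2_norm_vec_sum w_def)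
  then show ?thesis
    by (simp add: power2_norm_Basis_sum sum.swap[of _ Basis] flip: sum_distrib_left)
qed

lemma norm_consensus_iterate_le: "(\<And>j. norm (u j) \<le> B) \<Longrightarrow> norm ((consensus ^^ k) u i) \<le> B"
  by (induction k arbitrary: i) (auto intro: norm_consensus_le)

lemma norm_consensus_iterate_sum_zero_le:
  fixes u :: "'n \<Rightarrow> 'a::euclidean_space"
  assumes "(\<Sum>i\<in>UNIV. u i) = 0"
  shows "norm ((consensus ^^ k) u i) \<le> sigma2 W ^ k * sqrt (\<Sum>j\<in>UNIV. (norm (u j))\<^sup>2)"
proof -
  have "(\<Sum>i\<in>UNIV. (norm ((consensus ^^ k) u i))\<^sup>2) \<le> ((sigma2 W)\<^sup>2) ^ k * (\<Sum>i\<in>UNIV. (norm (u i))\<^sup>2)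
      \<and> (\<Sum>i\<in>UNIV. (consensus ^^ k) u i) = 0"
  proof (induction k)
    case (Suc k)
    then have "(\<Sum>i\<in>UNIV. (norm ((consensus ^^ Suc k) u i))\<^sup>2)
        \<le> (sigma2 W)\<^sup>2 * (((sigma2 W)\<^sup>2) ^ k * (\<Sum>i\<in>UNIV. (norm (u i))\<^sup>2))"
      using sum_power2_norm_consensus_sum_zero_le[of "(consensus ^^ k) u"]
      by (auto elim!: order_trans intro!: mult_left_mono)
    then show ?case
      using Suc by (simp add: sum_consensus mult.assoc)
  qed (simp add: assms)
  moreover have "(sigma2 W ^ k)\<^sup>2 = ((sigma2 W)\<^sup>2) ^ k"
    by (simp only: power_mult[symmetric] mult.commute)
  ultimately have "(norm ((consensus ^^ k) u i))\<^sup>2 \<le> (sigma2 W ^ k * sqrt (\<Sum>j\<in>UNIV. (norm (u j))\<^sup>2))\<^sup>2"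
    using member_le_sum[of i UNIV "\<lambda>i. (norm ((consensus ^^ k) u i))\<^sup>2"]
    by (simp add: power_mult_distrib sum_nonneg)
  then show ?thesis
    by (rule power2_le_imp_le) (simp add: sigma2_nonneg sum_nonneg)
qed

end

section \<open>Numerical estimates\<close>

lemma sum_inverse_Suc_le_ln: "1 \<le> T \<Longrightarrow> (\<Sum>t<T. 1 / (real t + 1)) \<le> 1 + ln (real T)"
  using euler_mascheroni_sequence_decreasing[of 1 T]
  by (simp add: harm_altdef inverse_eq_divide add.commute)

lemma sum_inverse_sqrt_ge: "2 * (sqrt (real T + 1) - 1) \<le> (\<Sum>t<T. 1 / sqrt (real t + 1))"
proof (induction T)
  case (Suc T)
  define a b where "a = sqrt (real T + 1)" and "b = sqrt (real T + 2)"
  have "0 < a" "a \<le> b"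
    by (simp_all add: a_def b_def)
  have "(b - a) * (b + a) = 1"
    by (simp add: a_def b_def algebra_simps)
  then have "b - a = 1 / (b + a)"
    using \<open>0 < a\<close> \<open>a \<le> b\<close> by (simp add: field_simps)
  also have "\<dots> \<le> 1 / (2 * a)"
    using \<open>0 < a\<close> \<open>a \<le> b\<close> by (intro divide_left_mono) auto
  finally have "2 * (b - a) \<le> 1 / a"
    using \<open>0 < a\<close> by (simp add: field_simps)
  then show ?case
    using Suc by (simp add: a_def b_def add.commute)
qed simp

lemma sum_step_size_ge:
  assumes "0 \<le> R"
  shows "2 * R * (sqrt (real T) - 1) \<le> (\<Sum>t<T. R / sqrt (real t + 1))"
proof -
  have "sqrt (real T) \<le> sqrt (real T + 1)"
    by simp
  then have "2 * (sqrt (real T) - 1) \<le> (\<Sum>t<T. 1 / sqrt (real t + 1))"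
    using sum_inverse_sqrt_ge[of T] by argo
  then have "R * (2 * (sqrt (real T) - 1)) \<le> R * (\<Sum>t<T. 1 / sqrt (real t + 1))"
    using assms by (rule mult_left_mono)
  then show ?thesis
    by (simp add: sum_distrib_left algebra_simps)
qed

lemma power_mult_sqrt_le_1:
  fixes s N :: real
  assumes "0 \<le> s" "s < 1" "1 \<le> N" "ln (sqrt N) / (1 - s) \<le> real K"
  shows "s ^ K * sqrt N \<le> 1"
proof -
  have "s ^ K \<le> exp (s - 1) ^ K"
    using assms exp_ge_add_one_self[of "s - 1"] by (intro power_mono) auto
  also have "\<dots> = exp (real K * (s - 1))"
    by (simp add: exp_of_nat_mult)
  also have "\<dots> \<le> exp (ln (sqrt N) / (1 - s) * (s - 1))"
    using mult_right_mono_neg[OF assms(4), of "s - 1"] assms(2) by simp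
  also have "ln (sqrt N) / (1 - s) * (s - 1) = - ln (sqrt N)"
    using assms by (simp add: field_simps)
  also have "exp (- ln (sqrt N)) = 1 / sqrt N"
    using assms by (simp add: exp_minus inverse_eq_divide)
  finally show ?thesis
    using assms by (simp add: field_simps)
qed

text \<open>The terms are at most \<open>2\<close> for the first \<open>\<lceil>ln \<surd>N / (1 - s)\<rceil>\<close> indices and afterwards bounded
  by a geometric series.\<close>
lemma sum_min_geometric_le:
  fixes s N :: real
  assumes "0 \<le> s" "s < 1" "1 \<le> N"
  shows "(\<Sum>k<T. min 2 (s ^ k * sqrt N)) \<le> 2 * (ln (sqrt N) / (1 - s)) + 2 + 1 / (1 - s)"
proof -
  define \<kappa> where "\<kappa> = ln (sqrt N) / (1 - s)"
  define K where "K = nat \<lceil>\<kappa>\<rceil>"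
  have "0 \<le> \<kappa>"
    using assms by (simp add: \<kappa>_def)
  then have K: "\<kappa> \<le> real K" "real K \<le> \<kappa> + 1"
    by (simp_all add: K_def)
  then have s_K: "s ^ K * sqrt N \<le> 1"
    using assms by (intro power_mult_sqrt_le_1) (simp_all add: \<kappa>_def)
  define M where "M = min T K"
  have "(\<Sum>k<T. min 2 (s ^ k * sqrt N))
      = (\<Sum>k\<in>{0..<M}. min 2 (s ^ k * sqrt N)) + (\<Sum>k\<in>{M..<T}. min 2 (s ^ k * sqrt N))"
    by (simp add: M_def sum.atLeastLessThan_concat atLeast0LessThan[symmetric])
  also have "(\<Sum>k\<in>{0..<M}. min 2 (s ^ k * sqrt N)) \<le> 2 * real M"
    using sum_bounded_above[of "{0..<M}" "\<lambda>k. min 2 (s ^ k * sqrt N)" 2] by simp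
  also have "(\<Sum>k\<in>{M..<T}. min 2 (s ^ k * sqrt N)) \<le> (\<Sum>k\<in>{M..<T}. s ^ (k - M))"
  proof (rule sum_mono)
    fix k
    assume "k \<in> {M..<T}"
    then have "M = K" "K \<le> k"
      by (auto simp: M_def)
    then have "s ^ k * sqrt N = s ^ (k - M) * (s ^ K * sqrt N)"
      by (simp flip: power_add)
    also have "\<dots> \<le> s ^ (k - M)"
      using s_K assms by (simp add: mult_left_le)
    finally show "min 2 (s ^ k * sqrt N) \<le> s ^ (k - M)"
      by simp
  qed
  also have "(\<Sum>k\<in>{M..<T}. s ^ (k - M)) = (\<Sum>j<T - M. s ^ j)"
    using sum.shift_bounds_nat_ivl[of "\<lambda>k. s ^ (k - M)" 0 M "T - M"]
    by (simp add: M_def atLeast0LessThan)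
  also have "\<dots> \<le> 1 / (1 - s)"
    using assms by (simp add: sum_gp_strict divide_right_mono)
  finally show ?thesis
    using K by (simp add: M_def \<kappa>_def)
qed

lemma two_thirds_le_ln:
  assumes "2 \<le> T"
  shows "2 / 3 \<le> ln (T::real)"
proof -
  have "ln 2 \<le> ln T"
    using assms by simp
  then show ?thesis
    using ln2_ge_two_thirds by linarith
qed

lemma contraction_sum_bound_le_log_powr:
  fixes N T \<sigma> :: real
  assumes "1 \<le> N" "2 \<le> T" "0 \<le> \<sigma>" "\<sigma> < 1"
  defines "X \<equiv> ln (T * sqrt (N * T)) / (1 - \<sigma>)"
  shows "2 * (ln (sqrt N) / (1 - \<sigma>)) + 2 + 1 / (1 - \<sigma>) \<le> 4 * X powr (3 / 2) - 1 / 2"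
proof -
  define u where "u = 1 / (1 - \<sigma>)"
  define \<kappa> where "\<kappa> = ln (sqrt N) / (1 - \<sigma>)"
  have "1 \<le> u" "0 \<le> \<kappa>"
    using assms by (simp_all add: u_def \<kappa>_def)
  have "2 / 3 \<le> ln T"
    using assms(2) by (rule two_thirds_le_ln)
  have "ln (T * sqrt (N * T)) = 3 / 2 * ln T + ln (sqrt N)"
    using assms by (simp add: ln_mult ln_sqrt real_sqrt_mult field_simps)
  then have "X = 3 / 2 * ln T * u + \<kappa>"
    by (simp add: X_def u_def \<kappa>_def add_divide_distrib)
  moreover have "1 * u \<le> 3 / 2 * ln T * u"
    using \<open>2 / 3 \<le> ln T\<close> \<open>1 \<le> u\<close> by (intro mult_right_mono) auto
  ultimately have "u + \<kappa> \<le> X"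
    by simp
  then have "1 \<le> X"
    using \<open>1 \<le> u\<close> \<open>0 \<le> \<kappa>\<close> by linarith
  then have "X \<le> X powr (3 / 2)"
    using powr_mono[of 1 "3 / 2" X] by simp
  then show ?thesis
    using \<open>u + \<kappa> \<le> X\<close> \<open>1 \<le> u\<close> \<open>0 \<le> \<kappa>\<close> unfolding u_def[symmetric] \<kappa>_def[symmetric] by linarith
qed

lemma grad_constant_le:
  fixes N m L R \<eta> :: real
  assumes "1 \<le> N" "1 \<le> m" "0 \<le> L" "0 \<le> R" "0 < \<eta>"
  shows "L + m * (2 * L * R / \<eta>) * L \<le> 2 * L * (1 + N * m powr (3 / 2) * L * R / \<eta>)"
proof -
  have "m \<le> N * m powr (3 / 2)"
    using powr_mono[of 1 "3 / 2" m] assms(1,2) mult_mono[of 1 N m "m powr (3 / 2)"] by simp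
  then have "m * (L * R / \<eta>) \<le> N * m powr (3 / 2) * (L * R / \<eta>)"
    using assms by (intro mult_right_mono) auto
  then have "1 + 2 * (m * (L * R / \<eta>)) \<le> 2 * (1 + N * m powr (3 / 2) * L * R / \<eta>)"
    by simp
  then have "L * (1 + 2 * (m * (L * R / \<eta>))) \<le> L * (2 * (1 + N * m powr (3 / 2) * L * R / \<eta>))"
    using assms(3) by (rule mult_left_mono)
  then show ?thesis
    by (simp add: algebra_simps)
qed

lemma rate_constant_bound:
  fixes N m L R \<eta> \<sigma> T H S :: real
  assumes "1 \<le> N" "1 \<le> m" "0 \<le> L" "0 \<le> R" "0 < \<eta>" "0 \<le> \<sigma>" "\<sigma> < 1" "2 \<le> T"
    and "0 \<le> H" "H \<le> 1 + ln T" "0 \<le> S" "S \<le> 2 * (ln (sqrt N) / (1 - \<sigma>)) + 2 + 1 / (1 - \<sigma>)"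
  defines "G \<equiv> L + m * (2 * L * R / \<eta>) * L"
    and "X \<equiv> ln (T * sqrt (N * T)) / (1 - \<sigma>)"
    and "Q \<equiv> 1 + N * m powr (3 / 2) * L * R / \<eta>"
  shows "1 / 2 + H * ((G\<^sup>2 + 4 * m * L\<^sup>2 * R\<^sup>2) / 2 + 2 * L * G * S)
    \<le> 2 * (1 + 5 / 2 * m * L\<^sup>2 * R\<^sup>2 + 20 * L\<^sup>2 * Q\<^sup>2 * X powr (3 / 2)) * ln T"
proof -
  define P where "P = L\<^sup>2 * Q\<^sup>2"
  have "2 / 3 \<le> ln T"
    using assms(8) by (rule two_thirds_le_ln)
  have "1 \<le> Q" "0 \<le> G" "0 \<le> P"
    using assms by (simp_all add: G_def Q_def P_def)
  have G_le: "G \<le> 2 * L * Q"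
    unfolding G_def Q_def using assms(1-5) by (rule grad_constant_le)
  then have "G\<^sup>2 \<le> (2 * L * Q)\<^sup>2"
    using \<open>0 \<le> G\<close> by (rule power_mono)
  then have G2: "G\<^sup>2 \<le> 4 * P"
    by (simp add: P_def power_mult_distrib)
  have "L * G \<le> L * (2 * L * Q)"
    using G_le assms(3) by (rule mult_left_mono)
  also have "\<dots> \<le> 2 * P"
    using \<open>1 \<le> Q\<close> mult_left_mono[of Q "Q\<^sup>2" "L\<^sup>2"] by (simp add: P_def power2_eq_square algebra_simps)
  finally have "L * G \<le> 2 * P" .
  moreover have "S \<le> 4 * X powr (3 / 2) - 1 / 2"
    using contraction_sum_bound_le_log_powr[OF assms(1,8,6,7)] assms(12) unfolding X_def by linarith
  ultimately have "(L * G) * S \<le> (2 * P) * (4 * X powr (3 / 2) - 1 / 2)"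
    using mult_mono[of "L * G" "2 * P" S "4 * X powr (3 / 2) - 1 / 2"] assms(11) \<open>0 \<le> P\<close> by simp
  then have LGS: "2 * L * G * S \<le> 16 * P * X powr (3 / 2) - 2 * P"
    by (simp add: algebra_simps)
  define B where "B = 2 * m * L\<^sup>2 * R\<^sup>2 + 16 * P * X powr (3 / 2)"
  have "(G\<^sup>2 + 4 * m * L\<^sup>2 * R\<^sup>2) / 2 + 2 * L * G * S \<le> B"
    using G2 LGS unfolding B_def by argo
  moreover have "0 \<le> B"
    using \<open>0 \<le> P\<close> assms(2) by (simp add: B_def)
  moreover have "0 \<le> (G\<^sup>2 + 4 * m * L\<^sup>2 * R\<^sup>2) / 2 + 2 * L * G * S"
    using \<open>0 \<le> G\<close> assms(2,3,11) by simp
  ultimately have "H * ((G\<^sup>2 + 4 * m * L\<^sup>2 * R\<^sup>2) / 2 + 2 * L * G * S) \<le> (5 / 2 * ln T) * B"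
    using assms(9,10) \<open>2 / 3 \<le> ln T\<close> by (intro mult_mono) auto
  then show ?thesis
    using \<open>2 / 3 \<le> ln T\<close> by (simp add: B_def P_def algebra_simps)
qed

section \<open>The distributed primal-dual iteration\<close>

lemma subgradient_upper_bound:
  fixes f :: "'a::real_inner \<Rightarrow> real"
  assumes "f z + inner D (w - z) \<le> f w" "norm D \<le> L"
  shows "f z \<le> f w + L * norm (w - z)"
proof -
  have "- inner D (w - z) \<le> norm D * norm (w - z)"
    using norm_cauchy_schwarz[of "- D" "w - z"] by simp
  also have "\<dots> \<le> L * norm (w - z)"
    using assms(2) by (simp add: mult_right_mono)
  finally show ?thesis
    using assms(1) by linarith
qed

lemma subgradient_gap_le:
  fixes f :: "'a::real_inner \<Rightarrow> real"
  assumes "f x + inner D (y - x) \<le> f y"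
  shows "f x - f y \<le> inner (x - y) D"
proof -
  have "inner (x - y) D = - inner D (y - x)"
    by (simp add: inner_commute inner_diff_left inner_diff_right)
  then show ?thesis
    using assms by linarith
qed

locale primal_dual = doubly_stochastic W for W :: "real^'n::finite^'n" +
  fixes f :: "'n \<Rightarrow> 'a::euclidean_space \<Rightarrow> real"
    and Df :: "'n \<Rightarrow> 'a \<Rightarrow> 'a"
    and g :: "'m::finite \<Rightarrow> 'a \<Rightarrow> real"
    and Dg :: "'m \<Rightarrow> 'a \<Rightarrow> 'a"
    and R L \<eta> :: real
    and \<alpha> :: "nat \<Rightarrow> real"
    and xstar :: 'a
  assumes xstar_in_ball: "norm xstar \<le> R"
    and xstar_feasible: "\<And>k. g k xstar \<le> 0"
    and f_convex: "\<And>j. convex_on (cball 0 R) (f j)"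
    and Df_subgrad: "\<And>j x y. x \<in> cball 0 R \<Longrightarrow> y \<in> cball 0 R \<Longrightarrow> f j x + inner (Df j x) (y - x) \<le> f j y"
    and Dg_subgrad: "\<And>k x y. x \<in> cball 0 R \<Longrightarrow> y \<in> cball 0 R \<Longrightarrow> g k x + inner (Dg k x) (y - x) \<le> g k y"
    and Df_bound: "\<And>j x. x \<in> cball 0 R \<Longrightarrow> norm (Df j x) \<le> L"
    and Dg_bound: "\<And>k x. x \<in> cball 0 R \<Longrightarrow> norm (Dg k x) \<le> L"
    and eta_pos: "0 < \<eta>"
    and alpha_pos: "\<And>t. 0 < \<alpha> t"
    and alpha_decseq: "decseq \<alpha>"
    and eta_alpha: "\<And>t. \<eta> * \<alpha> t \<le> 1"
begin

definition primal :: "nat \<Rightarrow> 'n \<Rightarrow> 'a" where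
  "primal t = fst (pd_iter W R \<eta> \<alpha> Df g Dg t)"

definition dual :: "nat \<Rightarrow> 'n \<Rightarrow> real^'m" where
  "dual t = snd (pd_iter W R \<eta> \<alpha> Df g Dg t)"

definition lagrangian_grad :: "nat \<Rightarrow> 'n \<Rightarrow> 'a" where
  "lagrangian_grad t j = Df j (primal t j) + (\<Sum>k\<in>UNIV. dual t j $ k *\<^sub>R Dg k (primal t j))"

lemma primal_0: "primal 0 = (\<lambda>i. 0)" and dual_0: "dual 0 = (\<lambda>i. 0)"
  by (simp_all add: primal_def dual_def)

lemma primal_Suc:
  "primal (Suc t) i = closest_point (cball 0 R) (consensus (\<lambda>j. primal t j - \<alpha> t *\<^sub>R lagrangian_grad t j) i)"
  by (simp add: primal_def dual_def lagrangian_grad_def consensus_def Let_def)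

lemma dual_Suc:
  "dual (Suc t) i $ k = max 0 (consensus (\<lambda>j. dual t j $ k + \<alpha> t * (g k (primal t j) - \<eta> * dual t j $ k)) i)"
  by (simp add: primal_def dual_def consensus_def Let_def closest_point_nonneg_orthant sum_component
      algebra_simps)

lemma R_nonneg: "0 \<le> R"
  using xstar_in_ball by (meson norm_ge_zero order_trans)

lemma xstar_mem_ball: "xstar \<in> cball 0 R"
  using xstar_in_ball by simp

lemma L_nonneg: "0 \<le> L"
proof -
  have "norm (Df j 0) \<le> L" for j
    using Df_bound R_nonneg by simp
  then show ?thesis
    by (meson norm_ge_zero order_trans)
qed

lemma primal_in_ball: "primal t i \<in> cball 0 R"
proof (cases t)
  case (Suc s)
  show ?thesis
    unfolding Suc primal_Suc using R_nonneg by (intro closest_point_in_set) auto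
qed (simp add: primal_0 R_nonneg)

lemma norm_diff_le_diameter: "x \<in> cball 0 R \<Longrightarrow> y \<in> cball 0 R \<Longrightarrow> norm (x - y) \<le> 2 * R"
  using norm_triangle_ineq4[of x y] by (simp add: mem_cball_0)

lemma f_lipschitz: "w \<in> cball 0 R \<Longrightarrow> z \<in> cball 0 R \<Longrightarrow> f j z \<le> f j w + L * norm (w - z)"
  using Df_subgrad Df_bound by (intro subgradient_upper_bound)

lemma g_lipschitz: "w \<in> cball 0 R \<Longrightarrow> z \<in> cball 0 R \<Longrightarrow> g k z \<le> g k w + L * norm (w - z)"
  using Dg_subgrad Dg_bound by (intro subgradient_upper_bound)

definition g_sup :: "'m \<Rightarrow> real" where
  "g_sup k = Sup (g k ` cball 0 R)"

lemma g_le: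
  assumes "z \<in> cball 0 R"
  shows "g k z \<le> 2 * L * R"
proof -
  have "g k z \<le> g k xstar + L * norm (xstar - z)"
    by (rule g_lipschitz[OF xstar_mem_ball assms])
  also have "\<dots> \<le> 0 + L * (2 * R)"
    using xstar_feasible norm_diff_le_diameter[OF xstar_mem_ball assms] L_nonneg
    by (intro add_mono mult_left_mono) auto
  finally show ?thesis
    by simp
qed

lemma g_le_g_sup: "z \<in> cball 0 R \<Longrightarrow> g k z \<le> g_sup k"
  unfolding g_sup_def using g_le by (intro cSup_upper bdd_aboveI) auto

lemma g_sup_le: "g_sup k \<le> 2 * L * R"
  unfolding g_sup_def using g_le R_nonneg by (intro cSup_least) auto

lemma g_sup_le_g: "z \<in> cball 0 R \<Longrightarrow> g_sup k \<le> g k z + 2 * L * R"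
  unfolding g_sup_def
proof (intro cSup_least)
  show "g k ` cball 0 R \<noteq> {}"
    using R_nonneg by auto
  fix y
  assume "z \<in> cball 0 R" "y \<in> g k ` cball 0 R"
  then obtain w where "w \<in> cball 0 R" "y = g k w"
    by auto
  have "g k w \<le> g k z + L * norm (z - w)"
    by (rule g_lipschitz[OF \<open>z \<in> cball 0 R\<close> \<open>w \<in> cball 0 R\<close>])
  also have "\<dots> \<le> g k z + L * (2 * R)"
    using norm_diff_le_diameter[OF \<open>z \<in> cball 0 R\<close> \<open>w \<in> cball 0 R\<close>] L_nonneg
    by (intro add_left_mono mult_left_mono)
  finally show "y \<le> g k z + 2 * L * R"
    using \<open>y = g k w\<close> by simp
qed

text \<open>The multiplier step is a convex combination of \<open>\<lambda>\<close> and \<open>g / \<eta>\<close> (as \<open>\<eta> \<alpha> \<le> 1\<close>), so it stays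
  below \<open>max 0 (sup g) / \<eta>\<close>.\<close>
lemma dual_bounds: "0 \<le> dual t i $ k \<and> \<eta> * dual t i $ k \<le> max 0 (g_sup k)"
proof (induction t arbitrary: i)
  case 0
  then show ?case
    by (simp add: dual_0)
next
  case (Suc t)
  have "\<eta> * (dual t j $ k + \<alpha> t * (g k (primal t j) - \<eta> * dual t j $ k)) \<le> max 0 (g_sup k)" for j
  proof -
    have "\<eta> * (dual t j $ k + \<alpha> t * (g k (primal t j) - \<eta> * dual t j $ k))
        = (1 - \<eta> * \<alpha> t) * (\<eta> * dual t j $ k) + (\<eta> * \<alpha> t) * g k (primal t j)"
      by (simp add: algebra_simps)
    also have "\<dots> \<le> (1 - \<eta> * \<alpha> t) * max 0 (g_sup k) + (\<eta> * \<alpha> t) * max 0 (g_sup k)"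
      using Suc.IH eta_alpha[of t] eta_pos alpha_pos[of t]
        g_le_g_sup[OF primal_in_ball, of k t j] max.coboundedI2[of "g k (primal t j)" "g_sup k" 0]
      by (intro add_mono mult_left_mono) auto
    finally show ?thesis
      by (simp add: algebra_simps)
  qed
  then have "\<eta> * consensus (\<lambda>j. dual t j $ k + \<alpha> t * (g k (primal t j) - \<eta> * dual t j $ k)) i
      \<le> max 0 (g_sup k)"
    using consensus_in_convex[of "{y. \<eta> * y \<le> max 0 (g_sup k)}"] convex_halfspace_le[of \<eta> "max 0 (g_sup k)"]
    by simp
  then show ?case
    using eta_pos by (simp add: dual_Suc)
qed

lemma dual_nonneg: "0 \<le> dual t i $ k"
  using dual_bounds by blast

lemma eta_dual_le: "\<eta> * dual t i $ k \<le> 2 * L * R"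
proof -
  have "max 0 (g_sup k) \<le> 2 * L * R"
    using g_sup_le[of k] L_nonneg R_nonneg by simp
  then show ?thesis
    using dual_bounds[of t i k] by linarith
qed

lemma dual_eq_0: "g_sup k \<le> 0 \<Longrightarrow> dual t i $ k = 0"
  using dual_bounds[of t i k] eta_pos by (simp add: mult_le_0_iff order_antisym)

definition grad_bound :: real where
  "grad_bound = L + real CARD('m) * (2 * L * R / \<eta>) * L"

lemma grad_bound_nonneg: "0 \<le> grad_bound"
  using L_nonneg R_nonneg eta_pos by (simp add: grad_bound_def)

lemma norm_lagrangian_grad_le: "norm (lagrangian_grad t j) \<le> grad_bound"
proof -
  have "norm (dual t j $ k *\<^sub>R Dg k (primal t j)) \<le> (2 * L * R / \<eta>) * L" for k
  proof -
    have "dual t j $ k \<le> 2 * L * R / \<eta>"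
      using eta_dual_le[of t j k] eta_pos by (simp add: field_simps)
    then have "dual t j $ k * norm (Dg k (primal t j)) \<le> (2 * L * R / \<eta>) * L"
      using Dg_bound[OF primal_in_ball] L_nonneg R_nonneg eta_pos by (intro mult_mono) auto
    then show ?thesis
      using dual_nonneg by simp
  qed
  then have "norm (\<Sum>k\<in>UNIV. dual t j $ k *\<^sub>R Dg k (primal t j)) \<le> (\<Sum>k\<in>(UNIV::'m set). (2 * L * R / \<eta>) * L)"
    by (intro order_trans[OF norm_sum] sum_mono)
  moreover have "norm (Df j (primal t j)) \<le> L"
    by (rule Df_bound[OF primal_in_ball])
  ultimately show ?thesis
    unfolding lagrangian_grad_def grad_bound_def
    by (intro order_trans[OF norm_triangle_ineq]) simp
qed

definition lyapunov :: "nat \<Rightarrow> real" where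
  "lyapunov t = (\<Sum>i\<in>UNIV. (norm (primal t i - xstar))\<^sup>2) + (\<Sum>i\<in>UNIV. (norm (dual t i))\<^sup>2)"

definition gap :: "nat \<Rightarrow> real" where
  "gap t = (\<Sum>j\<in>UNIV. f j (primal t j) - f j xstar)"

definition step_noise :: real where
  "step_noise = grad_bound\<^sup>2 + 4 * real CARD('m) * L\<^sup>2 * R\<^sup>2"

lemma primal_descent:
  "(\<Sum>i\<in>UNIV. (norm (primal (Suc t) i - xstar))\<^sup>2)
    \<le> (\<Sum>j\<in>UNIV. (norm (primal t j - \<alpha> t *\<^sub>R lagrangian_grad t j - xstar))\<^sup>2)"
proof -
  define y where "y = (\<lambda>j. primal t j - \<alpha> t *\<^sub>R lagrangian_grad t j)"
  have "norm (primal (Suc t) i - xstar) \<le> norm (consensus y i - xstar)" for i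
  proof -
    have "primal (Suc t) i = closest_point (cball 0 R) (consensus y i)"
      by (simp add: primal_Suc y_def)
    then show ?thesis
      using closest_point_lipschitz[OF convex_cball closed_cball, of 0 R "consensus y i" xstar] R_nonneg
        closest_point_self[OF xstar_mem_ball]
      by (auto simp: dist_norm)
  qed
  then have "(\<Sum>i\<in>UNIV. (norm (primal (Suc t) i - xstar))\<^sup>2) \<le> (\<Sum>i\<in>UNIV. (norm (consensus (\<lambda>j. y j - xstar) i))\<^sup>2)"
    by (intro sum_mono power_mono) (auto simp: consensus_diff_const)
  also have "\<dots> \<le> (\<Sum>j\<in>UNIV. (norm (y j - xstar))\<^sup>2)"
    by (rule sum_power2_norm_consensus_le)
  finally show ?thesis
    by (simp add: y_def)
qed

lemma inner_lagrangian_grad_ge: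
  "f j (primal t j) - f j xstar + (\<Sum>k\<in>UNIV. dual t j $ k * g k (primal t j))
    \<le> inner (primal t j - xstar) (lagrangian_grad t j)"
proof -
  have "f j (primal t j) - f j xstar \<le> inner (primal t j - xstar) (Df j (primal t j))"
    by (rule subgradient_gap_le) (rule Df_subgrad[OF primal_in_ball xstar_mem_ball])
  moreover have "dual t j $ k * g k (primal t j) \<le> dual t j $ k * inner (primal t j - xstar) (Dg k (primal t j))"
    for k
  proof -
    have "g k (primal t j) - g k xstar \<le> inner (primal t j - xstar) (Dg k (primal t j))"
      by (rule subgradient_gap_le) (rule Dg_subgrad[OF primal_in_ball xstar_mem_ball])
    then show ?thesis
      using xstar_feasible[of k] dual_nonneg by (intro mult_left_mono) auto
  qed
  then have "(\<Sum>k\<in>UNIV. dual t j $ k * g k (primal t j))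
      \<le> (\<Sum>k\<in>UNIV. dual t j $ k * inner (primal t j - xstar) (Dg k (primal t j)))"
    by (rule sum_mono)
  moreover have "inner (primal t j - xstar) (lagrangian_grad t j) = inner (primal t j - xstar) (Df j (primal t j))
      + (\<Sum>k\<in>UNIV. dual t j $ k * inner (primal t j - xstar) (Dg k (primal t j)))"
    by (simp add: lagrangian_grad_def inner_add_right inner_sum_right)
  ultimately show ?thesis
    by linarith
qed

lemma primal_step_le:
  "(norm (primal t j - \<alpha> t *\<^sub>R lagrangian_grad t j - xstar))\<^sup>2
    \<le> (norm (primal t j - xstar))\<^sup>2
       - 2 * \<alpha> t * (f j (primal t j) - f j xstar + (\<Sum>k\<in>UNIV. dual t j $ k * g k (primal t j)))
       + (\<alpha> t)\<^sup>2 * grad_bound\<^sup>2"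
proof -
  have "primal t j - \<alpha> t *\<^sub>R lagrangian_grad t j - xstar = (primal t j - xstar) + (- \<alpha> t) *\<^sub>R lagrangian_grad t j"
    by (simp add: algebra_simps)
  then have "(norm (primal t j - \<alpha> t *\<^sub>R lagrangian_grad t j - xstar))\<^sup>2
      = (norm (primal t j - xstar))\<^sup>2 - 2 * \<alpha> t * inner (primal t j - xstar) (lagrangian_grad t j)
        + (\<alpha> t)\<^sup>2 * (norm (lagrangian_grad t j))\<^sup>2"
    by (simp only: power2_norm_add_scaleR) simp
  moreover have "(\<alpha> t)\<^sup>2 * (norm (lagrangian_grad t j))\<^sup>2 \<le> (\<alpha> t)\<^sup>2 * grad_bound\<^sup>2"
    using norm_lagrangian_grad_le by (intro mult_left_mono power_mono) auto
  moreover have "2 * \<alpha> t * (f j (primal t j) - f j xstar + (\<Sum>k\<in>UNIV. dual t j $ k * g k (primal t j)))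
      \<le> 2 * \<alpha> t * inner (primal t j - xstar) (lagrangian_grad t j)"
    using inner_lagrangian_grad_ge[of j t] alpha_pos[of t] by (intro mult_left_mono) auto
  ultimately show ?thesis
    by linarith
qed

text \<open>If \<open>sup g\<^sub>k > 0\<close> the invariant \<open>0 \<le> \<eta> \<lambda> \<le> sup g\<^sub>k\<close> and \<open>sup g\<^sub>k - 2 L R \<le> g\<^sub>k\<close> keep the dual
  gradient \<open>g\<^sub>k - \<eta> \<lambda>\<^sub>k\<close> within \<open>[-2 L R, 2 L R]\<close>; otherwise all multipliers \<open>\<lambda>\<^sub>k\<close> vanish.\<close>
lemma dual_descent:
  "(\<Sum>i\<in>UNIV. (dual (Suc t) i $ k)\<^sup>2)
    \<le> (\<Sum>j\<in>UNIV. (dual t j $ k)\<^sup>2 + 2 * \<alpha> t * (dual t j $ k * g k (primal t j)) + (\<alpha> t)\<^sup>2 * (4 * L\<^sup>2 * R\<^sup>2))"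
proof (cases "g_sup k \<le> 0")
  case True
  then show ?thesis
    using dual_eq_0[OF True] by (simp add: sum_nonneg)
next
  case False
  define \<gamma> where "\<gamma> = (\<lambda>j. dual t j $ k + \<alpha> t * (g k (primal t j) - \<eta> * dual t j $ k))"
  have "(dual (Suc t) i $ k)\<^sup>2 \<le> (consensus \<gamma> i)\<^sup>2" for i
    by (cases "0 \<le> consensus \<gamma> i") (auto simp: dual_Suc \<gamma>_def)
  then have "(\<Sum>i\<in>UNIV. (dual (Suc t) i $ k)\<^sup>2) \<le> (\<Sum>i\<in>UNIV. (consensus \<gamma> i)\<^sup>2)"
    by (rule sum_mono)
  also have "\<dots> \<le> (\<Sum>j\<in>UNIV. (\<gamma> j)\<^sup>2)"
    using sum_power2_norm_consensus_le[of \<gamma>] by simp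
  also have "\<dots> \<le> (\<Sum>j\<in>UNIV. (dual t j $ k)\<^sup>2 + 2 * \<alpha> t * (dual t j $ k * g k (primal t j)) + (\<alpha> t)\<^sup>2 * (4 * L\<^sup>2 * R\<^sup>2))"
  proof (rule sum_mono)
    fix j
    define l d where "l = dual t j $ k" and "d = g k (primal t j) - \<eta> * dual t j $ k"
    have "0 \<le> \<eta> * dual t j $ k" "\<eta> * dual t j $ k \<le> g_sup k"
      using dual_nonneg[of t j k] dual_bounds[of t j k] eta_pos False by auto
    then have "\<bar>d\<bar> \<le> 2 * L * R"
      using g_le[OF primal_in_ball, of k t j] g_sup_le_g[OF primal_in_ball, of k t j]
      unfolding d_def abs_le_iff by linarith
    then have "d\<^sup>2 \<le> 4 * L\<^sup>2 * R\<^sup>2"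
      using abs_le_square_iff[of d "2 * L * R"] L_nonneg R_nonneg by (simp add: power_mult_distrib)
    then have "(\<alpha> t)\<^sup>2 * d\<^sup>2 \<le> (\<alpha> t)\<^sup>2 * (4 * L\<^sup>2 * R\<^sup>2)"
      by (rule mult_left_mono) simp
    moreover have "2 * \<alpha> t * (l * d) \<le> 2 * \<alpha> t * (l * g k (primal t j))"
      using dual_nonneg[of t j k] eta_pos alpha_pos[of t]
      by (intro mult_left_mono) (auto simp: l_def d_def right_diff_distrib)
    moreover have "(\<gamma> j)\<^sup>2 = l\<^sup>2 + 2 * \<alpha> t * (l * d) + (\<alpha> t)\<^sup>2 * d\<^sup>2"
      by (simp add: \<gamma>_def l_def d_def power2_eq_square algebra_simps)
    ultimately show "(\<gamma> j)\<^sup>2 \<le> (dual t j $ k)\<^sup>2 + 2 * \<alpha> t * (dual t j $ k * g k (primal t j)) + (\<alpha> t)\<^sup>2 * (4 * L\<^sup>2 * R\<^sup>2)"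
      unfolding l_def by linarith
  qed
  finally show ?thesis .
qed

lemma lyapunov_Suc_le:
  "lyapunov (Suc t) \<le> lyapunov t - 2 * \<alpha> t * gap t + (\<alpha> t)\<^sup>2 * (real CARD('n) * step_noise)"
proof -
  define S where "S j = (\<Sum>k\<in>UNIV. dual t j $ k * g k (primal t j))" for j
  have primal: "(\<Sum>i\<in>UNIV. (norm (primal (Suc t) i - xstar))\<^sup>2)
      \<le> (\<Sum>j\<in>UNIV. (norm (primal t j - xstar))\<^sup>2 - 2 * \<alpha> t * (f j (primal t j) - f j xstar + S j)
        + (\<alpha> t)\<^sup>2 * grad_bound\<^sup>2)"
    unfolding S_def by (rule order_trans[OF primal_descent sum_mono[OF primal_step_le]])
  have "(\<Sum>i\<in>UNIV. (norm (dual (Suc t) i))\<^sup>2) = (\<Sum>k\<in>UNIV. \<Sum>i\<in>UNIV. (dual (Suc t) i $ k)\<^sup>2)"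
    unfolding power2_norm_vec_sum by (rule sum.swap)
  also have "\<dots> \<le> (\<Sum>k\<in>UNIV. \<Sum>j\<in>UNIV. (dual t j $ k)\<^sup>2 + 2 * \<alpha> t * (dual t j $ k * g k (primal t j))
      + (\<alpha> t)\<^sup>2 * (4 * L\<^sup>2 * R\<^sup>2))"
    by (intro sum_mono dual_descent)
  also have "\<dots> = (\<Sum>j\<in>UNIV. (norm (dual t j))\<^sup>2 + 2 * \<alpha> t * S j + (\<alpha> t)\<^sup>2 * (4 * real CARD('m) * L\<^sup>2 * R\<^sup>2))"
    unfolding S_def power2_norm_vec_sum
    by (subst sum.swap) (simp add: sum.distrib sum_distrib_left)
  finally have dual: "(\<Sum>i\<in>UNIV. (norm (dual (Suc t) i))\<^sup>2)
      \<le> (\<Sum>j\<in>UNIV. (norm (dual t j))\<^sup>2 + 2 * \<alpha> t * S j + (\<alpha> t)\<^sup>2 * (4 * real CARD('m) * L\<^sup>2 * R\<^sup>2))" .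
  have "lyapunov (Suc t) \<le> (\<Sum>j\<in>UNIV. (norm (primal t j - xstar))\<^sup>2
        - 2 * \<alpha> t * (f j (primal t j) - f j xstar + S j) + (\<alpha> t)\<^sup>2 * grad_bound\<^sup>2)
      + (\<Sum>j\<in>UNIV. (norm (dual t j))\<^sup>2 + 2 * \<alpha> t * S j + (\<alpha> t)\<^sup>2 * (4 * real CARD('m) * L\<^sup>2 * R\<^sup>2))"
    unfolding lyapunov_def using primal dual by (rule add_mono)
  also have "\<dots> = (\<Sum>j\<in>UNIV. ((norm (primal t j - xstar))\<^sup>2 + (norm (dual t j))\<^sup>2)
      - 2 * \<alpha> t * (f j (primal t j) - f j xstar) + (\<alpha> t)\<^sup>2 * step_noise)"
    unfolding sum.distrib[symmetric] by (intro sum.cong refl) (simp add: step_noise_def algebra_simps)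
  also have "\<dots> = lyapunov t - 2 * \<alpha> t * gap t + (\<alpha> t)\<^sup>2 * (real CARD('n) * step_noise)"
    by (simp add: lyapunov_def gap_def sum.distrib sum_subtractf flip: sum_distrib_left)
  finally show ?thesis .
qed

lemma weighted_gap_sum_le:
  "(\<Sum>t<T. \<alpha> t * gap t) \<le> real CARD('n) * (R\<^sup>2 + step_noise * (\<Sum>t<T. (\<alpha> t)\<^sup>2)) / 2"
proof -
  have "lyapunov T + 2 * (\<Sum>t<T. \<alpha> t * gap t) \<le> lyapunov 0 + real CARD('n) * step_noise * (\<Sum>t<T. (\<alpha> t)\<^sup>2)"
  proof (induction T)
    case (Suc T)
    then show ?case
      using lyapunov_Suc_le[of T] by (simp add: algebra_simps)
  qed simp
  moreover have "0 \<le> lyapunov T"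
    by (simp add: lyapunov_def sum_nonneg)
  moreover have "lyapunov 0 \<le> real CARD('n) * R\<^sup>2"
    using xstar_in_ball by (simp add: lyapunov_def primal_0 dual_0 power_mono)
  ultimately show ?thesis
    by (simp add: algebra_simps)
qed

definition average :: "nat \<Rightarrow> 'a" where
  "average t = (1 / real CARD('n)) *\<^sub>R (\<Sum>j\<in>UNIV. primal t j)"

definition deviation :: "nat \<Rightarrow> 'n \<Rightarrow> 'a" where
  "deviation t i = primal t i - average t"

definition perturbation :: "nat \<Rightarrow> 'n \<Rightarrow> 'a" where
  "perturbation t i = primal (Suc t) i - consensus (primal t) i"

definition centered_perturbation :: "nat \<Rightarrow> 'n \<Rightarrow> 'a" where
  "centered_perturbation t i = perturbation t i - (1 / real CARD('n)) *\<^sub>R (\<Sum>j\<in>UNIV. perturbation t j)"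

lemma norm_perturbation_le: "norm (perturbation t i) \<le> \<alpha> t * grad_bound"
proof -
  define y where "y = (\<lambda>j. primal t j - \<alpha> t *\<^sub>R lagrangian_grad t j)"
  have "consensus (primal t) i \<in> cball 0 R"
    using primal_in_ball by (intro consensus_in_convex) auto
  then have "norm (perturbation t i) \<le> norm (consensus y i - consensus (primal t) i)"
    using closest_point_lipschitz[OF convex_cball closed_cball, of 0 R "consensus y i" "consensus (primal t) i"]
      closest_point_self[of "consensus (primal t) i"] R_nonneg
    by (auto simp: perturbation_def primal_Suc y_def dist_norm)
  also have "consensus y i - consensus (primal t) i = consensus (\<lambda>j. - (\<alpha> t *\<^sub>R lagrangian_grad t j)) i"
    by (simp add: y_def consensus_def scaleR_diff_right sum_subtractf flip: sum_negf)
  also have "norm \<dots> \<le> \<alpha> t * grad_bound"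
    using norm_lagrangian_grad_le alpha_pos[of t] by (intro norm_consensus_le) (simp add: mult_left_mono)
  finally show ?thesis .
qed

lemma sum_centered_perturbation: "(\<Sum>i\<in>UNIV. centered_perturbation t i) = 0"
  by (simp add: centered_perturbation_def sum_subtractf sum_constant_scaleR)

lemma norm_centered_perturbation_le: "norm (centered_perturbation t i) \<le> 2 * (\<alpha> t * grad_bound)"
proof -
  define e where "e = (1 / real CARD('n)) *\<^sub>R (\<Sum>j\<in>UNIV. perturbation t j)"
  have "norm e \<le> \<alpha> t * grad_bound"
    using norm_perturbation_le by (simp add: e_def scaleR_sum_right norm_convex_combination_le)
  then show ?thesis
    using norm_triangle_ineq4[of "perturbation t i" e] norm_perturbation_le[of t i]
    unfolding centered_perturbation_def e_def[symmetric] by linarith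
qed

text \<open>Centering is an orthogonal projection, so it does not increase the sum of squared norms.\<close>
lemma sum_power2_norm_centered_perturbation_le:
  "(\<Sum>i\<in>UNIV. (norm (centered_perturbation t i))\<^sup>2) \<le> real CARD('n) * (\<alpha> t * grad_bound)\<^sup>2"
proof -
  define e where "e = (1 / real CARD('n)) *\<^sub>R (\<Sum>j\<in>UNIV. perturbation t j)"
  have "(\<Sum>j\<in>UNIV. perturbation t j) = real CARD('n) *\<^sub>R e"
    by (simp add: e_def)
  have "(\<Sum>i\<in>UNIV. (norm (centered_perturbation t i))\<^sup>2)
      = (\<Sum>i\<in>UNIV. (norm (perturbation t i))\<^sup>2 - 2 * inner (perturbation t i) e + (norm e)\<^sup>2)"
    unfolding centered_perturbation_def e_def[symmetric] power2_norm_eq_inner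
    by (simp add: inner_diff_left inner_diff_right inner_commute algebra_simps)
  also have "\<dots> = (\<Sum>i\<in>UNIV. (norm (perturbation t i))\<^sup>2) - 2 * inner (\<Sum>i\<in>UNIV. perturbation t i) e
      + real CARD('n) * (norm e)\<^sup>2"
    by (simp add: sum.distrib sum_subtractf inner_sum_left sum_distrib_left)
  also have "\<dots> = (\<Sum>i\<in>UNIV. (norm (perturbation t i))\<^sup>2) - real CARD('n) * (norm e)\<^sup>2"
    unfolding \<open>(\<Sum>j\<in>UNIV. perturbation t j) = real CARD('n) *\<^sub>R e\<close> by (simp add: power2_norm_eq_inner)
  also have "\<dots> \<le> (\<Sum>i\<in>UNIV. (norm (perturbation t i))\<^sup>2)"
    by simp
  also have "\<dots> \<le> (\<Sum>i\<in>(UNIV::'n set). (\<alpha> t * grad_bound)\<^sup>2)"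
    using norm_perturbation_le by (intro sum_mono power_mono) auto
  finally show ?thesis
    by simp
qed

lemma deviation_Suc: "deviation (Suc t) i = consensus (deviation t) i + centered_perturbation t i"
proof -
  have "average (Suc t) = average t + (1 / real CARD('n)) *\<^sub>R (\<Sum>j\<in>UNIV. perturbation t j)"
    by (simp add: average_def perturbation_def sum_subtractf sum_consensus algebra_simps)
  then show ?thesis
    unfolding deviation_def centered_perturbation_def perturbation_def
    by (simp add: consensus_diff_const)
qed

lemma deviation_eq_sum: "deviation t i = (\<Sum>s<t. (consensus ^^ (t - Suc s)) (centered_perturbation s) i)"
proof (induction t arbitrary: i)
  case 0
  then show ?case
    by (simp add: deviation_def average_def primal_0)
next
  case (Suc t)
  have "consensus (deviation t) i = (\<Sum>s<t. (consensus ^^ (Suc t - Suc s)) (centered_perturbation s) i)"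
    unfolding Suc.IH[abs_def] consensus_sum
  proof (intro sum.cong refl)
    fix s
    assume "s \<in> {..<t}"
    then have "Suc t - Suc s = Suc (t - Suc s)"
      by auto
    then show "consensus ((consensus ^^ (t - Suc s)) (centered_perturbation s)) i
        = (consensus ^^ (Suc t - Suc s)) (centered_perturbation s) i"
      by simp
  qed
  then show ?case
    by (simp add: deviation_Suc)
qed

definition contraction :: "nat \<Rightarrow> real" where
  "contraction k = min 2 (sigma2 W ^ k * sqrt (real CARD('n)))"

lemma contraction_nonneg: "0 \<le> contraction k"
  using sigma2_nonneg by (simp add: contraction_def)

lemma norm_consensus_iterate_centered_perturbation_le:
  "norm ((consensus ^^ k) (centered_perturbation s) i) \<le> \<alpha> s * grad_bound * contraction k"
proof -
  have "norm ((consensus ^^ k) (centered_perturbation s) i) \<le> 2 * (\<alpha> s * grad_bound)"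
    by (intro norm_consensus_iterate_le norm_centered_perturbation_le)
  moreover have "norm ((consensus ^^ k) (centered_perturbation s) i)
      \<le> sigma2 W ^ k * sqrt (real CARD('n) * (\<alpha> s * grad_bound)\<^sup>2)"
  proof -
    have "sqrt (\<Sum>j\<in>UNIV. (norm (centered_perturbation s j))\<^sup>2) \<le> sqrt (real CARD('n) * (\<alpha> s * grad_bound)\<^sup>2)"
      using sum_power2_norm_centered_perturbation_le by simp
    then have "sigma2 W ^ k * sqrt (\<Sum>j\<in>UNIV. (norm (centered_perturbation s j))\<^sup>2)
        \<le> sigma2 W ^ k * sqrt (real CARD('n) * (\<alpha> s * grad_bound)\<^sup>2)"
      by (rule mult_left_mono) (simp add: sigma2_nonneg)
    then show ?thesis
      using norm_consensus_iterate_sum_zero_le[OF sum_centered_perturbation, of k s i] by linarith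
  qed
  moreover have "sqrt (real CARD('n) * (\<alpha> s * grad_bound)\<^sup>2) = sqrt (real CARD('n)) * (\<alpha> s * grad_bound)"
    using alpha_pos[of s] grad_bound_nonneg by (simp add: real_sqrt_mult)
  ultimately show ?thesis
    unfolding contraction_def using alpha_pos[of s] grad_bound_nonneg
    by (auto simp: min_def algebra_simps)
qed

definition deviation_bound :: "nat \<Rightarrow> real" where
  "deviation_bound t = grad_bound * (\<Sum>s<t. \<alpha> s * contraction (t - Suc s))"

lemma norm_deviation_le: "norm (deviation t i) \<le> deviation_bound t"
proof -
  have "norm (deviation t i) \<le> (\<Sum>s<t. norm ((consensus ^^ (t - Suc s)) (centered_perturbation s) i))"
    unfolding deviation_eq_sum by (rule norm_sum)
  also have "\<dots> \<le> (\<Sum>s<t. \<alpha> s * grad_bound * contraction (t - Suc s))"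
    by (intro sum_mono norm_consensus_iterate_centered_perturbation_le)
  finally show ?thesis
    by (simp add: deviation_bound_def sum_distrib_left algebra_simps)
qed

lemma norm_primal_diff_le: "norm (primal t i - primal t j) \<le> 2 * deviation_bound t"
  using norm_triangle_ineq4[of "deviation t i" "deviation t j"] norm_deviation_le[of t i] norm_deviation_le[of t j]
  by (simp add: deviation_def)

lemma weighted_deviation_sum_le:
  "(\<Sum>t<T. \<alpha> t * deviation_bound t) \<le> grad_bound * (\<Sum>t<T. (\<alpha> t)\<^sup>2) * (\<Sum>k<T. contraction k)"
proof -
  have "(\<Sum>t<T. \<Sum>s<t. \<alpha> t * (\<alpha> s * contraction (t - Suc s)))
      \<le> (\<Sum>t<T. \<Sum>s<t. (\<alpha> s)\<^sup>2 * contraction (t - Suc s))"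
  proof (intro sum_mono)
    fix t s :: nat
    assume "s \<in> {..<t}"
    then have "\<alpha> t * \<alpha> s \<le> \<alpha> s * \<alpha> s"
      using alpha_decseq alpha_pos[of s] by (auto simp: decseq_def intro: mult_right_mono)
    then have "\<alpha> t * \<alpha> s * contraction (t - Suc s) \<le> \<alpha> s * \<alpha> s * contraction (t - Suc s)"
      using contraction_nonneg by (rule mult_right_mono)
    then show "\<alpha> t * (\<alpha> s * contraction (t - Suc s)) \<le> (\<alpha> s)\<^sup>2 * contraction (t - Suc s)"
      by (simp add: power2_eq_square mult.assoc)
  qed
  also have "\<dots> = (\<Sum>s<T. (\<alpha> s)\<^sup>2 * (\<Sum>t\<in>{Suc s..<T}. contraction (t - Suc s)))"
    by (subst sum_lessThan_triangle_swap) (simp add: sum_distrib_left)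
  also have "\<dots> \<le> (\<Sum>s<T. (\<alpha> s)\<^sup>2 * (\<Sum>k<T. contraction k))"
  proof (intro sum_mono mult_left_mono)
    fix s
    assume "s \<in> {..<T}"
    then have "(\<Sum>t\<in>{Suc s..<T}. contraction (t - Suc s)) = (\<Sum>k<T - Suc s. contraction k)"
      using sum.shift_bounds_nat_ivl[of "\<lambda>t. contraction (t - Suc s)" 0 "Suc s" "T - Suc s"]
      by (simp add: atLeast0LessThan)
    also have "\<dots> \<le> (\<Sum>k<T. contraction k)"
      using contraction_nonneg by (intro sum_mono2) auto
    finally show "(\<Sum>t\<in>{Suc s..<T}. contraction (t - Suc s)) \<le> (\<Sum>k<T. contraction k)" .
  qed simp
  finally have "(\<Sum>t<T. \<Sum>s<t. \<alpha> t * (\<alpha> s * contraction (t - Suc s)))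
      \<le> (\<Sum>t<T. (\<alpha> t)\<^sup>2) * (\<Sum>k<T. contraction k)"
    by (simp add: sum_distrib_right)
  moreover have "(\<Sum>t<T. \<alpha> t * deviation_bound t)
      = grad_bound * (\<Sum>t<T. \<Sum>s<t. \<alpha> t * (\<alpha> s * contraction (t - Suc s)))"
    by (simp add: deviation_bound_def sum_distrib_left mult.left_commute)
  ultimately show ?thesis
    using mult_left_mono[OF _ grad_bound_nonneg] by (simp add: mult.assoc)
qed

lemma estimate_gap_le:
  assumes "1 \<le> T"
  shows "(\<Sum>j\<in>UNIV. f j (pd_estimate W R \<eta> \<alpha> Df g Dg i T)) - (\<Sum>j\<in>UNIV. f j xstar)
    \<le> ((\<Sum>t<T. \<alpha> t * gap t) + 2 * real CARD('n) * L * (\<Sum>t<T. \<alpha> t * deviation_bound t)) / (\<Sum>t<T. \<alpha> t)"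
proof -
  define A where "A = (\<Sum>t<T. \<alpha> t)"
  define w where "w t = \<alpha> t / A" for t
  have "0 < A"
    unfolding A_def using assms alpha_pos by (intro sum_pos) (auto simp: lessThan_empty_iff)
  then have w: "\<And>t. 0 \<le> w t" "(\<Sum>t<T. w t) = 1"
    using alpha_pos by (simp_all add: w_def less_imp_le flip: sum_divide_distrib A_def)
  have "pd_estimate W R \<eta> \<alpha> Df g Dg i T = (\<Sum>t<T. w t *\<^sub>R primal t i)"
    by (simp add: pd_estimate_def primal_def w_def A_def scaleR_sum_right divide_inverse mult.commute)
  then have "f j (pd_estimate W R \<eta> \<alpha> Df g Dg i T) \<le> (\<Sum>t<T. w t * f j (primal t i))" for j
    using w primal_in_ball by (auto intro!: convex_on_sum[OF _ _ f_convex])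
  also have "f j (primal t i) \<le> f j (primal t j) + L * (2 * deviation_bound t)" for j t
  proof -
    have "f j (primal t i) \<le> f j (primal t j) + L * norm (primal t j - primal t i)"
      by (rule f_lipschitz) (rule primal_in_ball)+
    also have "\<dots> \<le> f j (primal t j) + L * (2 * deviation_bound t)"
      using norm_primal_diff_le L_nonneg by (intro add_left_mono mult_left_mono)
    finally show ?thesis .
  qed
  then have "(\<Sum>t<T. w t * f j (primal t i)) \<le> (\<Sum>t<T. w t * (f j (primal t j) + L * (2 * deviation_bound t)))"
    for j
    using w by (intro sum_mono mult_left_mono) auto
  finally have "(\<Sum>j\<in>UNIV. f j (pd_estimate W R \<eta> \<alpha> Df g Dg i T))
      \<le> (\<Sum>j\<in>UNIV. \<Sum>t<T. w t * (f j (primal t j) + L * (2 * deviation_bound t)))"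
    by (rule sum_mono)
  also have "\<dots> = (\<Sum>t<T. w t * ((\<Sum>j\<in>UNIV. f j (primal t j)) + real CARD('n) * (L * (2 * deviation_bound t))))"
    by (subst sum.swap) (simp add: sum.distrib sum_distrib_left algebra_simps)
  moreover have "(\<Sum>j\<in>UNIV. f j xstar) = (\<Sum>t<T. w t * (\<Sum>j\<in>UNIV. f j xstar))"
    using w by (simp flip: sum_distrib_right)
  ultimately have "(\<Sum>j\<in>UNIV. f j (pd_estimate W R \<eta> \<alpha> Df g Dg i T)) - (\<Sum>j\<in>UNIV. f j xstar)
      \<le> (\<Sum>t<T. w t * ((\<Sum>j\<in>UNIV. f j (primal t j)) + real CARD('n) * (L * (2 * deviation_bound t))))
        - (\<Sum>t<T. w t * (\<Sum>j\<in>UNIV. f j xstar))"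
    by linarith
  also have "\<dots> = (\<Sum>t<T. w t * (gap t + real CARD('n) * (L * (2 * deviation_bound t))))"
    unfolding sum_subtractf[symmetric] gap_def by (intro sum.cong refl) (simp add: sum_subtractf algebra_simps)
  also have "\<dots> = ((\<Sum>t<T. \<alpha> t * gap t) + 2 * real CARD('n) * L * (\<Sum>t<T. \<alpha> t * deviation_bound t)) / A"
    by (simp add: w_def sum_divide_distrib sum.distrib sum_distrib_left add_divide_distrib algebra_simps)
  finally show ?thesis
    by (simp add: A_def)
qed

lemma estimate_gap_le_weighted_sums:
  assumes "1 \<le> T"
  shows "(\<Sum>j\<in>UNIV. f j (pd_estimate W R \<eta> \<alpha> Df g Dg i T)) / real CARD('n)
           - (\<Sum>j\<in>UNIV. f j xstar) / real CARD('n)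
         \<le> (R\<^sup>2 / 2 + (\<Sum>t<T. (\<alpha> t)\<^sup>2) * (step_noise / 2 + 2 * L * grad_bound * (\<Sum>k<T. contraction k)))
           / (\<Sum>t<T. \<alpha> t)"
proof -
  define N where "N = real CARD('n)"
  define A where "A = (\<Sum>t<T. \<alpha> t)"
  define A2 where "A2 = (\<Sum>t<T. (\<alpha> t)\<^sup>2)"
  define S where "S = (\<Sum>k<T. contraction k)"
  have "1 \<le> N"
    by (simp add: N_def)
  have "0 < A"
    unfolding A_def using assms alpha_pos by (intro sum_pos) (auto simp: lessThan_empty_iff)
  have "((\<Sum>j\<in>UNIV. f j (pd_estimate W R \<eta> \<alpha> Df g Dg i T)) - (\<Sum>j\<in>UNIV. f j xstar)) / N
      \<le> ((\<Sum>t<T. \<alpha> t * gap t) + 2 * N * L * (\<Sum>t<T. \<alpha> t * deviation_bound t)) / A / N"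
    using estimate_gap_le[OF assms, of i] \<open>1 \<le> N\<close> unfolding N_def A_def
    by (intro divide_right_mono) auto
  also have "\<dots> \<le> (N * (R\<^sup>2 + step_noise * A2) / 2 + 2 * N * L * (grad_bound * A2 * S)) / A / N"
  proof -
    have "2 * N * L * (\<Sum>t<T. \<alpha> t * deviation_bound t) \<le> 2 * N * L * (grad_bound * A2 * S)"
      using weighted_deviation_sum_le[of T] L_nonneg \<open>1 \<le> N\<close>
      by (intro mult_left_mono) (auto simp: A2_def S_def)
    then show ?thesis
      using weighted_gap_sum_le[of T] \<open>1 \<le> N\<close> \<open>0 < A\<close>
      by (intro divide_right_mono add_mono) (auto simp: N_def A2_def)
  qed
  also have "\<dots> = (R\<^sup>2 / 2 + A2 * (step_noise / 2 + 2 * L * grad_bound * S)) / A"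
    using \<open>1 \<le> N\<close> by (simp add: divide_simps) (simp add: algebra_simps)
  finally show ?thesis
    by (simp add: N_def A_def A2_def S_def diff_divide_distrib)
qed

lemma estimate_rate:
  assumes alpha_eq: "\<And>t. \<alpha> t = R / sqrt (real t + 1)" and "2 \<le> T" and "sigma2 W < 1"
  shows "(\<Sum>j\<in>UNIV. f j (pd_estimate W R \<eta> \<alpha> Df g Dg i T)) / real CARD('n)
           - (\<Sum>j\<in>UNIV. f j xstar) / real CARD('n)
         \<le> R * (1 + 5 / 2 * real CARD('m) * L\<^sup>2 * R\<^sup>2
                 + 20 * L\<^sup>2 * (1 + real CARD('n) * real CARD('m) powr (3 / 2) * L * R / \<eta>)\<^sup>2
                   * (ln (real T * sqrt (real CARD('n) * real T)) / (1 - sigma2 W)) powr (3 / 2))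
             * ln (real T) / (sqrt (real T) - 1)"
    (is "?gap \<le> R * ?C * ln (real T) / (sqrt (real T) - 1)")
proof -
  define H where "H = (\<Sum>t<T. 1 / (real t + 1))"
  define S where "S = (\<Sum>k<T. contraction k)"
  define K where "K = 1 / 2 + H * (step_noise / 2 + 2 * L * grad_bound * S)"
  have "0 < R"
    using alpha_pos[of 0] alpha_eq[of 0] by simp
  have "0 \<le> H" "0 \<le> S"
    using contraction_nonneg by (simp_all add: H_def S_def sum_nonneg)
  have "(\<Sum>t<T. (\<alpha> t)\<^sup>2) = R\<^sup>2 * H"
    by (simp add: H_def alpha_eq power_divide sum_distrib_left)
  then have "?gap \<le> R\<^sup>2 * K / (\<Sum>t<T. \<alpha> t)"
    using estimate_gap_le_weighted_sums[of T i] \<open>2 \<le> T\<close> by (simp add: K_def S_def algebra_simps)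
  also have "\<dots> \<le> R\<^sup>2 * K / (2 * R * (sqrt (real T) - 1))"
  proof (rule divide_left_mono)
    show "2 * R * (sqrt (real T) - 1) \<le> (\<Sum>t<T. \<alpha> t)"
      using sum_step_size_ge[of R T] \<open>0 < R\<close> by (simp add: alpha_eq)
    show "0 \<le> R\<^sup>2 * K"
      using \<open>0 \<le> H\<close> \<open>0 \<le> S\<close> grad_bound_nonneg L_nonneg by (simp add: K_def step_noise_def)
    show "0 < (\<Sum>t<T. \<alpha> t) * (2 * R * (sqrt (real T) - 1))"
      using \<open>0 < R\<close> \<open>2 \<le> T\<close> alpha_pos by (intro mult_pos_pos sum_pos) (auto simp: lessThan_empty_iff)
  qed
  also have "K \<le> 2 * ?C * ln (real T)"
    unfolding K_def step_noise_def grad_bound_def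
  proof (rule rate_constant_bound)
    show "0 \<le> sigma2 W"
      by (rule sigma2_nonneg)
    show "H \<le> 1 + ln (real T)"
      using sum_inverse_Suc_le_ln[of T] \<open>2 \<le> T\<close> by (simp add: H_def)
    show "S \<le> 2 * (ln (sqrt (real CARD('n))) / (1 - sigma2 W)) + 2 + 1 / (1 - sigma2 W)"
      unfolding S_def contraction_def using sigma2_nonneg \<open>sigma2 W < 1\<close> by (rule sum_min_geometric_le) simp
  qed (use L_nonneg R_nonneg eta_pos \<open>2 \<le> T\<close> \<open>sigma2 W < 1\<close> \<open>0 \<le> H\<close> \<open>0 \<le> S\<close> in auto)
  then have "R\<^sup>2 * K / (2 * R * (sqrt (real T) - 1)) \<le> R\<^sup>2 * (2 * ?C * ln (real T)) / (2 * R * (sqrt (real T) - 1))"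
    using \<open>0 < R\<close> \<open>2 \<le> T\<close> by (intro divide_right_mono mult_left_mono) auto
  also have "\<dots> = R * ?C * ln (real T) / (sqrt (real T) - 1)"
  proof -
    have "R\<^sup>2 * (2 * c) / (2 * R * d) = R * c / d" if "0 < d" for c d
      using \<open>0 < R\<close> that by (simp add: power2_eq_square field_simps)
    then show ?thesis
      using \<open>2 \<le> T\<close> by (simp only: mult.assoc) simp
  qed
  finally show ?thesis .
qed

end

theorem theorem2:
  fixes fi :: "'n::finite \<Rightarrow> 'a::euclidean_space \<Rightarrow> real"
    and Df :: "'n \<Rightarrow> 'a \<Rightarrow> 'a"
    and g :: "'m::finite \<Rightarrow> 'a \<Rightarrow> real"
    and Dg :: "'m \<Rightarrow> 'a \<Rightarrow> 'a"
    and W :: "real^'n^'n"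
    and E :: "('n \<times> 'n) set"
    and X :: "'a set"
    and R L \<eta> :: real
    and \<alpha> :: "nat \<Rightarrow> real"
    and xstar :: 'a
    and i :: 'n
    and T :: nat
  defines "X \<equiv> {x. \<forall>k. g k x \<le> 0}"
  assumes X_nonempty: "X \<noteq> {}"
    and X_convex: "convex X"
    and X_compact: "compact X"
    and R_def: "R = Sup (norm ` X)"
    and slater: "\<exists>xt. \<forall>k. g k xt < 0"
    and f_convex: "\<And>j. convex_on (cball 0 R) (fi j)"
    and g_convex: "\<And>k. convex_on (cball 0 R) (g k)"
    and Df_subgrad: "\<And>j x y. x \<in> cball 0 R \<Longrightarrow> y \<in> cball 0 R \<Longrightarrow>
                       fi j y \<ge> fi j x + Df j x \<bullet> (y - x)"
    and Dg_subgrad: "\<And>k x y. x \<in> cball 0 R \<Longrightarrow> y \<in> cball 0 R \<Longrightarrow>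
                       g k y \<ge> g k x + Dg k x \<bullet> (y - x)"
    and Df_bound: "\<And>j x. x \<in> cball 0 R \<Longrightarrow> norm (Df j x) \<le> L"
    and Dg_bound: "\<And>k x. x \<in> cball 0 R \<Longrightarrow> norm (Dg k x) \<le> L"
    and E_sym: "sym E"
    and E_connected: "\<And>a b. (a, b) \<in> E\<^sup>*"
    and W_nonneg_entries: "\<And>a b. W $ a $ b \<ge> 0"
    and W_rows: "\<And>a. (\<Sum>b\<in>UNIV. W $ a $ b) = 1"
    and W_cols: "\<And>b. (\<Sum>a\<in>UNIV. W $ a $ b) = 1"
    and W_edge: "\<And>a b. (a, b) \<in> E \<Longrightarrow> W $ a $ b > 0"
    and W_nonedge: "\<And>a b. (a, b) \<notin> E \<Longrightarrow> W $ a $ b = 0"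
    and sigma2_lt1: "sigma2 W < 1"
    and xstar_opt: "xstar \<in> X" "\<And>x. x \<in> X \<Longrightarrow> (\<Sum>j\<in>UNIV. fi j xstar) / real CARD('n) \<le> (\<Sum>j\<in>UNIV. fi j x) / real CARD('n)"
    and alpha_def: "\<And>t. \<alpha> t = R / sqrt (real t + 1)"
    and eta_pos: "\<eta> > 0"
    and eta_alpha: "\<And>t. \<eta> * \<alpha> t \<le> 1 / 2"
    and T_ge: "T \<ge> 2"
  shows "(\<Sum>j\<in>UNIV. fi j (pd_estimate W R \<eta> \<alpha> Df g Dg i T)) / real CARD('n)
           - (\<Sum>j\<in>UNIV. fi j xstar) / real CARD('n)
         \<le> R * (1 + 5 / 2 * real CARD('m) * L\<^sup>2 * R\<^sup>2
                 + 20 * L\<^sup>2 * (1 + real CARD('n) * real CARD('m) powr (3 / 2) * L * R / \<eta>)\<^sup>2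
                   * (ln (real T * sqrt (real CARD('n) * real T)) / (1 - sigma2 W)) powr (3 / 2))
             * ln (real T) / (sqrt (real T) - 1)"
proof -
  have xstar_in_ball: "norm xstar \<le> R"
  proof -
    obtain B where "\<And>x. x \<in> X \<Longrightarrow> norm x \<le> B"
      using compact_imp_bounded[OF X_compact] by (auto simp: bounded_iff)
    then show ?thesis
      unfolding R_def using xstar_opt(1) by (intro cSup_upper bdd_aboveI) auto
  qed
  show ?thesis
  proof (cases "R = 0")
    case True
    then show ?thesis
      using xstar_in_ball by (simp add: pd_estimate_def alpha_def)
  next
    case False
    then have "0 < R"
      using xstar_in_ball norm_ge_zero[of xstar] by linarith
    interpret primal_dual W fi Df g Dg R L \<eta> \<alpha> xstar
    proof unfold_locales
      show "g k xstar \<le> 0" for k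
        using xstar_opt(1) by (simp add: X_def)
      show "0 < \<alpha> t" for t
        using \<open>0 < R\<close> by (simp add: alpha_def)
      show "decseq \<alpha>"
        using \<open>0 < R\<close> by (auto simp: decseq_def alpha_def intro!: divide_left_mono)
      show "\<eta> * \<alpha> t \<le> 1" for t
        using eta_alpha[of t] by simp
    qed (use xstar_in_ball assms in auto)
    show ?thesis
      by (rule estimate_rate[OF alpha_def T_ge sigma2_lt1])
  qed
qed

end
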